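(* Fix an equation $(f,q,w)$ as in the context with $\prod_{i=0}^{N-1}(1/f_i)>0$. Let $\gamma\in(-\pi,0)\cup(0,\pi)$ and $K=(k_{ij})\in SL(2,\mathbb R)$ with $k_{11}-f_0k_{12}\neq0$. Let $\mathbf U_K=\begin{pmatrix}k_{11}&k_{12}&0&0\\0&0&1&0\end{pmatrix}$. For $M\in\{K,-K\}$ with entries $m_{ij}$, write $\lambda_j(M)$, $\lambda_j(-M)$, $\lambda_j(e^{i\gamma}M)$, $\lambda_j(\mathbf U_K)$ for the eigenvalues with boundary conditions $[M|-I]$, $[-M|-I]$, $[e^{i\gamma}M|-I]$, $\mathbf U_K$, and put $m_j=\min\{\lambda_j(M),\lambda_j(-M)\}$, $M_j=\max\{\lambda_j(M),\lambda_j(-M)\}$. If $m_{11}-f_0m_{12}>0$, then for every $0\le j\le N-1$: $\lambda_j(M)<\lambda_j(e^{i\gamma}M)<\lambda_j(-M)$ if $j$ is even and $\lambda_j(-M)<\lambda_j(e^{i\gamma}M)<\lambda_j(M)$ if $j$ is odd; and $M_j\le\lambda_j(\mathbf U_K)\le m_{j+1}$ for $0\le j\le N-2$.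
   Context: Let $N\ge2$ be an integer. An equation is given by real sequences $f=\{f_n\}_{n=0}^N$, $q=\{q_n\}_{n=1}^N$, $w=\{w_n\}_{n=1}^N$ with $f_n\neq0$, $w_n>0$; it is $-\nabla(f_n\Delta y_n)+q_ny_n=\lambda w_ny_n$, $1\le n\le N$, for $y=\{y_n\}_{n=0}^{N+1}$, $\Delta y_n=y_{n+1}-y_n$, $\nabla y_n=y_n-y_{n-1}$. A boundary condition $[A\,|\,B]$ (equivalently the $2\times4$ coefficient matrix $(A,B)$ of rank 2) is $A(y_0,f_0\Delta y_0)^T+B(y_N,f_N\Delta y_N)^T=0$; matrices differing by left multiplication by an invertible $2\times2$ complex matrix give the same condition (so $\mathbf U_{-K}=\mathbf U_K$). $SL(2,\mathbb R)$: real $2\times2$ matrices of determinant 1; $I$ the identity. Eigenvalues ($\lambda$ with a nontrivial solution) are real; multiplicity = dimension of the solution space; counted with multiplicity they are ordered $\lambda_0\le\lambda_1\le\cdots$. *)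

theory Defs
  imports "HOL-Analysis.Analysis" "HOL-Library.Function_Algebras" "HOL-Library.Multiset"
begin

definition vec2 :: "'a \<Rightarrow> 'a \<Rightarrow> 'a ^ 2" where
  "vec2 a b = (\<chi> i. if i = 1 then a else b)"

definition mat2 :: "'a \<Rightarrow> 'a \<Rightarrow> 'a \<Rightarrow> 'a \<Rightarrow> 'a ^ 2 ^ 2" where
  "mat2 a b c d = (\<chi> i j. if i = 1 then (if j = 1 then a else b) else (if j = 1 then c else d))"

text \<open>A boundary condition [A|B] is a pair of complex 2x2 matrices (the 2x4 matrix (A,B)).
  It reads  A (y_0, f_0 \<Delta>y_0)^T + B (y_N, f_N \<Delta>y_N)^T = 0.\<close>
type_synonym bc = "(complex ^ 2 ^ 2) \<times> (complex ^ 2 ^ 2)"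

definition bc_holds :: "(nat \<Rightarrow> real) \<Rightarrow> nat \<Rightarrow> bc \<Rightarrow> (nat \<Rightarrow> complex) \<Rightarrow> bool" where
  "bc_holds f N AB y \<longleftrightarrow>
     fst AB *v vec2 (y 0) (of_real (f 0) * (y 1 - y 0))
   + snd AB *v vec2 (y N) (of_real (f N) * (y (N+1) - y N)) = 0"

definition sl_eq :: "(nat \<Rightarrow> real) \<Rightarrow> (nat \<Rightarrow> real) \<Rightarrow> (nat \<Rightarrow> real) \<Rightarrow> nat \<Rightarrow> real \<Rightarrow> (nat \<Rightarrow> complex) \<Rightarrow> bool" where
  "sl_eq f q w N lam y \<longleftrightarrow>
     (\<forall>n\<in>{1..N}. - (of_real (f n) * (y (n+1) - y n) - of_real (f (n-1)) * (y n - y (n-1)))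
                  + of_real (q n) * y n = of_real (lam * w n) * y n)"

definition sol_space :: "(nat \<Rightarrow> real) \<Rightarrow> (nat \<Rightarrow> real) \<Rightarrow> (nat \<Rightarrow> real) \<Rightarrow> nat \<Rightarrow> bc \<Rightarrow> real \<Rightarrow> (nat \<Rightarrow> complex) set" where
  "sol_space f q w N AB lam =
     {y. (\<forall>n > N + 1. y n = 0) \<and> sl_eq f q w N lam y \<and> bc_holds f N AB y}"

definition cscale :: "complex \<Rightarrow> (nat \<Rightarrow> complex) \<Rightarrow> (nat \<Rightarrow> complex)" where
  "cscale c y = (\<lambda>n. c * y n)"

definition multiplicity :: "(nat \<Rightarrow> real) \<Rightarrow> (nat \<Rightarrow> real) \<Rightarrow> (nat \<Rightarrow> real) \<Rightarrow> nat \<Rightarrow> bc \<Rightarrow> real \<Rightarrow> nat" where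
  "multiplicity f q w N AB lam = vector_space.dim cscale (sol_space f q w N AB lam)"

definition is_eigenvalue :: "(nat \<Rightarrow> real) \<Rightarrow> (nat \<Rightarrow> real) \<Rightarrow> (nat \<Rightarrow> real) \<Rightarrow> nat \<Rightarrow> bc \<Rightarrow> real \<Rightarrow> bool" where
  "is_eigenvalue f q w N AB lam \<longleftrightarrow> (\<exists>y\<in>sol_space f q w N AB lam. y \<noteq> 0)"

definition eig_mset :: "(nat \<Rightarrow> real) \<Rightarrow> (nat \<Rightarrow> real) \<Rightarrow> (nat \<Rightarrow> real) \<Rightarrow> nat \<Rightarrow> bc \<Rightarrow> real multiset" where
  "eig_mset f q w N AB =
     (\<Sum>\<mu>\<in>{\<mu>. is_eigenvalue f q w N AB \<mu>}. replicate_mset (multiplicity f q w N AB \<mu>) \<mu>)"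

definition eig :: "(nat \<Rightarrow> real) \<Rightarrow> (nat \<Rightarrow> real) \<Rightarrow> (nat \<Rightarrow> real) \<Rightarrow> nat \<Rightarrow> bc \<Rightarrow> nat \<Rightarrow> real" where
  "eig f q w N AB j = sorted_list_of_multiset (eig_mset f q w N AB) ! j"

definition coupled_bc :: "complex ^ 2 ^ 2 \<Rightarrow> bc" where
  "coupled_bc M = (M, - mat 1)"

definition cmat :: "complex \<Rightarrow> real ^ 2 ^ 2 \<Rightarrow> complex ^ 2 ^ 2" where
  "cmat c M = (\<chi> i j. c * of_real (M $ i $ j))"

definition U_bc :: "real ^ 2 ^ 2 \<Rightarrow> bc" where
  "U_bc K = (mat2 (of_real (K$1$1)) (of_real (K$1$2)) 0 0, mat2 0 0 1 0)"

end

theory Submission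
  imports Defs "HOL-Computational_Algebra.Fundamental_Theorem_Algebra"
begin

text \<open>Let \<open>\<phi>\<close>, \<open>\<psi>\<close> be the solutions with initial data \<open>(y\<^sub>0, f\<^sub>0 \<Delta>y\<^sub>0) = (1, 0), (0, 1)\<close>. Their
  values and quasi-derivatives at \<open>N\<close> are real polynomials in \<open>\<lambda>\<close> forming a monodromy matrix
  \<open>\<Phi>(\<lambda>)\<close> of determinant \<open>1\<close>, and every solution satisfies
  \<open>(y\<^sub>N, f\<^sub>N \<Delta>y\<^sub>N) = \<Phi>(\<lambda>) (y\<^sub>0, f\<^sub>0 \<Delta>y\<^sub>0)\<close>. Hence \<open>\<lambda>\<close> is an eigenvalue for \<open>[c M | -I]\<close>
  iff \<open>c\<^sup>2 - c \<Delta>(\<lambda>) + 1 = 0\<close> with the discriminant \<open>\<Delta> = tr (M\<^sup>-\<^sup>1 \<Phi>)\<close>, i.e. iff \<open>\<Delta>(\<lambda>) = \<plusminus>2\<close>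
  for \<open>c = \<plusminus>1\<close> and \<open>\<Delta>(\<lambda>) = 2 cos \<gamma>\<close> for \<open>c = e\<^sup>i\<^sup>\<gamma>\<close>; the multiplicity is \<open>2\<close> exactly when
  \<open>\<Phi>(\<lambda>) = c M\<close>.

  Green's identity shows that \<open>\<Delta>\<close> has only real simple roots and that \<open>\<Delta>' \<noteq> 0\<close> where
  \<open>\<bar>\<Delta>\<bar> < 2\<close>, while \<open>m\<^sub>1\<^sub>1 - f\<^sub>0 m\<^sub>1\<^sub>2 > 0\<close> fixes the sign of its leading coefficient. So the real
  line splits into \<open>N\<close> consecutive pieces on each of which \<open>\<Delta>\<close> is strictly monotone and takes
  every value in \<open>[-2, 2]\<close> exactly once; the \<open>j\<close>-th eigenvalue for the level \<open>c\<close> is the point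
  of the \<open>j\<close>-th piece where \<open>\<Delta> = c\<close>, and monotonicity gives the first chain of inequalities.

  The eigenvalues for \<open>U\<^sub>K\<close> are the \<open>N - 1\<close> roots of \<open>H = m\<^sub>1\<^sub>2 \<phi>\<^sub>N - m\<^sub>1\<^sub>1 \<psi>\<^sub>N\<close>. The same
  quadratic form that gives \<open>\<Delta>'\<close> shows \<open>H \<Delta>' > 0\<close> where \<open>\<bar>\<Delta>\<bar> < 2\<close>; as \<open>\<Delta>'\<close> alternates in
  sign from piece to piece, \<open>H\<close> has a root in each gap between consecutive bands, which is the
  interlacing.\<close>

section \<open>Singular \<open>2 \<times> 2\<close> systems and real-rooted polynomials\<close>

lemma singular_2x2_kernel_row:
  fixes x11 x12 x21 x22 :: "'a :: field"
  assumes det: "x11 * x22 - x12 * x21 = 0" and row: "x11 \<noteq> 0 \<or> x12 \<noteq> 0"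
  shows "(x11 * v1 + x12 * v2 = 0 \<and> x21 * v1 + x22 * v2 = 0) \<longleftrightarrow> (\<exists>t. v1 = t * x12 \<and> v2 = - t * x11)"
proof
  assume eqs: "x11 * v1 + x12 * v2 = 0 \<and> x21 * v1 + x22 * v2 = 0"
  show "\<exists>t. v1 = t * x12 \<and> v2 = - t * x11"
  proof (cases "x11 = 0")
    case True
    with row eqs show ?thesis by (intro exI[of _ "v1 / x12"]) auto
  next
    case False
    with eqs show ?thesis by (intro exI[of _ "- v2 / x11"]) (auto simp: field_simps add_eq_0_iff)
  qed
next
  assume "\<exists>t. v1 = t * x12 \<and> v2 = - t * x11"
  with det show "x11 * v1 + x12 * v2 = 0 \<and> x21 * v1 + x22 * v2 = 0"
    by (auto simp: algebra_simps)
qed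

lemma singular_2x2_kernel_line:
  fixes x11 x12 x21 x22 :: "'a :: field"
  assumes det: "x11 * x22 - x12 * x21 = 0" and nz: "x11 \<noteq> 0 \<or> x12 \<noteq> 0 \<or> x21 \<noteq> 0 \<or> x22 \<noteq> 0"
  shows "\<exists>a b. (a \<noteq> 0 \<or> b \<noteq> 0) \<and>
           (\<forall>v1 v2. (x11 * v1 + x12 * v2 = 0 \<and> x21 * v1 + x22 * v2 = 0) \<longleftrightarrow> (\<exists>t. v1 = t * a \<and> v2 = t * b))"
proof (cases "x11 \<noteq> 0 \<or> x12 \<noteq> 0")
  case True
  then show ?thesis
    using singular_2x2_kernel_row[OF det True] by (intro exI[of _ x12] exI[of _ "- x11"]) auto
next
  case False
  then have row2: "x21 \<noteq> 0 \<or> x22 \<noteq> 0" and det': "x21 * x12 - x22 * x11 = 0"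
    using nz by auto
  show ?thesis
    using singular_2x2_kernel_row[OF det' row2] row2
    by (intro exI[of _ x22] exI[of _ "- x21"]) (auto simp: conj_commute)
qed

lemma singular_2x2_kernel_nontrivial:
  fixes x11 x12 x21 x22 :: "'a :: field"
  assumes "x11 * x22 - x12 * x21 = 0"
  shows "\<exists>v1 v2. (v1 \<noteq> 0 \<or> v2 \<noteq> 0) \<and> x11 * v1 + x12 * v2 = 0 \<and> x21 * v1 + x22 * v2 = 0"
proof (cases "x11 = 0 \<and> x12 = 0 \<and> x21 = 0 \<and> x22 = 0")
  case True
  then show ?thesis by (intro exI[of _ 1] exI[of _ 0]) simp
next
  case False
  then show ?thesis using singular_2x2_kernel_line[OF assms] by (metis mult_1_left)
qed

lemma regular_2x2_kernel_trivial:
  fixes x11 x12 x21 x22 :: "'a :: field"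
  assumes "x11 * x22 - x12 * x21 \<noteq> 0" "x11 * v1 + x12 * v2 = 0" "x21 * v1 + x22 * v2 = 0"
  shows "v1 = 0 \<and> v2 = 0"
proof -
  have "(x11 * x22 - x12 * x21) * v1 = x22 * (x11 * v1 + x12 * v2) - x12 * (x21 * v1 + x22 * v2)"
       "(x11 * x22 - x12 * x21) * v2 = x11 * (x21 * v1 + x22 * v2) - x21 * (x11 * v1 + x12 * v2)"
    by (simp_all add: algebra_simps)
  then have "(x11 * x22 - x12 * x21) * v1 = 0" "(x11 * x22 - x12 * x21) * v2 = 0"
    unfolding assms(2,3) by simp_all
  with assms(1) show ?thesis by simp
qed

lemma poly_gt_at_top:
  fixes p :: "real poly"
  assumes "degree p > 0" "lead_coeff p > 0"
  shows "\<exists>n. \<forall>x\<ge>n. poly p x > c"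
proof -
  have "lead_coeff ([:- c:] + p) = lead_coeff p"
    using assms(1) by (intro lead_coeff_add_le) simp
  then obtain n where "\<forall>x\<ge>n. poly ([:- c:] + p) x \<ge> lead_coeff p"
    using poly_pinfty_gt_lc[of "[:- c:] + p"] assms(2) by auto
  with assms(2) show ?thesis by (intro exI[of _ n]) force
qed

lemma poly_gt_at_bot:
  fixes p :: "real poly"
  assumes "degree p > 0" "(-1) ^ degree p * lead_coeff p > 0"
  shows "\<exists>n. \<forall>x\<le>n. poly p x > c"
proof -
  define r where "r = pcompose p [:0, -1:]"
  have deg: "degree r = degree p"
    by (simp add: r_def degree_pcompose)
  have "lead_coeff r = lead_coeff p * lead_coeff [:0, -1::real:] ^ degree p"
    unfolding r_def by (rule lead_coeff_comp) simp
  then have "lead_coeff r = (-1) ^ degree p * lead_coeff p"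
    using deg by (simp add: mult.commute)
  then obtain n where n: "\<forall>x\<ge>n. poly r x > c" using poly_gt_at_top[of r] deg assms by auto
  show ?thesis
  proof (intro exI allI impI)
    fix x assume "x \<le> - n"
    then have "poly r (- x) > c" using n by auto
    then show "poly p x > c" by (simp add: r_def poly_pcompose)
  qed
qed

abbreviation cpoly :: "real poly \<Rightarrow> complex poly" where
  "cpoly \<equiv> map_poly of_real"

lemma cpoly_add [simp]: "cpoly (p + q) = cpoly p + cpoly q"
  by (rule poly_eqI) (simp add: coeff_map_poly)

lemma cpoly_diff [simp]: "cpoly (p - q) = cpoly p - cpoly q"
  by (rule poly_eqI) (simp add: coeff_map_poly)

lemma cpoly_mult [simp]: "cpoly (p * q) = cpoly p * cpoly q"
  by (rule poly_eqI) (simp add: coeff_map_poly coeff_mult)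

lemma cpoly_pCons [simp]: "cpoly (pCons a p) = pCons (of_real a) (cpoly p)"
  by (simp add: map_poly_pCons)

lemma cpoly_smult [simp]: "cpoly (smult a p) = smult (of_real a) (cpoly p)"
  by (rule poly_eqI) (simp add: coeff_map_poly)

lemma cpoly_uminus [simp]: "cpoly (- p) = - cpoly p"
  by (rule poly_eqI) (simp add: coeff_map_poly)

lemma poly_cpoly_of_real [simp]: "poly (cpoly p) (of_real x) = of_real (poly p x)"
  by (induction p) auto

lemma pderiv_cpoly: "pderiv (cpoly p) = cpoly (pderiv p)"
  by (rule poly_eqI) (simp add: coeff_map_poly coeff_pderiv)

lemma card_roots_eq_degree_if_real_simple:
  fixes p :: "real poly"
  assumes "p \<noteq> 0"
    and real: "\<And>z. poly (cpoly p) z = 0 \<Longrightarrow> Im z = 0"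
    and simple: "\<And>x. poly p x = 0 \<Longrightarrow> poly (pderiv p) x \<noteq> 0"
  shows "card {x. poly p x = 0} = degree p"
proof -
  have croots: "{z. poly (cpoly p) z = 0} = of_real ` {x. poly p x = 0}"
  proof (intro set_eqI iffI)
    fix z assume "z \<in> {z. poly (cpoly p) z = 0}"
    moreover from this have "z = of_real (Re z)" using real by (simp add: complex_eq_iff)
    ultimately show "z \<in> of_real ` {x. poly p x = 0}"
      by (metis (mono_tags) image_eqI mem_Collect_eq of_real_eq_0_iff poly_cpoly_of_real)
  qed auto
  have "rsquarefree (cpoly p)"
    unfolding rsquarefree_roots
  proof (intro allI notI)
    fix a assume a: "poly (cpoly p) a = 0 \<and> poly (pderiv (cpoly p)) a = 0"
    then obtain x where "a = of_real x" "poly p x = 0" using croots by auto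
    with a simple show False by (simp add: pderiv_cpoly)
  qed
  then have "cpoly p = smult (lead_coeff (cpoly p)) (\<Prod>z | poly (cpoly p) z = 0. [:-z, 1:])"
    by (simp add: complex_poly_decompose_rsquarefree)
  moreover have "lead_coeff (cpoly p) \<noteq> 0" using assms(1) by (simp add: map_poly_eq_0_iff)
  ultimately have "degree (cpoly p) = degree (\<Prod>z | poly (cpoly p) z = 0. [:-z, 1:])"
    by (metis degree_smult_eq)
  also have "\<dots> = card {z. poly (cpoly p) z = 0}"
    by (subst degree_prod_sum_eq) auto
  also have "\<dots> = card {x. poly p x = 0}"
    unfolding croots by (rule card_image) (simp add: inj_on_def)
  finally show ?thesis by (simp add: degree_map_poly)
qed

section \<open>Band structure of a discriminant\<close>

lemma neg_one_power_sign:
  fixes a b :: real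
  assumes "a * b > 0" "(-1) ^ k * b < 0"
  shows "(-1) ^ k * a < 0"
  using assms by (cases "even k") (auto simp: zero_less_mult_iff)

lemma abs_neg_one_power_mult: "\<bar>(-1) ^ k * a\<bar> = \<bar>a :: real\<bar>"
  by (simp add: abs_mult)

locale band_poly =
  fixes S :: "real poly" and N :: nat
  assumes N2: "N \<ge> 2"
    and degree_S: "degree S = N"
    and card_roots: "card {x. poly S x = 0} = N"
    and pderiv_nonzero_inside: "\<And>x. \<bar>poly S x\<bar> < 2 \<Longrightarrow> poly (pderiv S) x \<noteq> 0"
    and large_at_bot: "\<exists>X. \<forall>x\<le>X. poly S x > 2"
    and large_at_top: "\<exists>Y. \<forall>x\<ge>Y. (-1) ^ N * poly S x > 2"
begin

abbreviation dS :: "real \<Rightarrow> real" where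
  "dS x \<equiv> poly (pderiv S) x"

lemma finite_roots: "finite {x. poly S x = 0}"
  using degree_S N2 by (intro poly_roots_finite) auto

definition root :: "nat \<Rightarrow> real" where
  "root j = sorted_list_of_set {x. poly S x = 0} ! j"

lemma root_less: "i < j \<Longrightarrow> j < N \<Longrightarrow> root i < root j"
  unfolding root_def using finite_roots card_roots
  by (intro sorted_wrt_nth_less[where P = "(<)"]) auto

lemma root_le: "i \<le> j \<Longrightarrow> j < N \<Longrightarrow> root i \<le> root j"
  using root_less[of i j] by (cases "i = j") auto

lemma poly_root: "j < N \<Longrightarrow> poly S (root j) = 0"
  using finite_roots card_roots nth_mem[of j "sorted_list_of_set {x. poly S x = 0}"]
  by (simp add: root_def)

definition crit :: "nat \<Rightarrow> real" where
  "crit j = (SOME x. root j < x \<and> x < root (Suc j) \<and> dS x = 0)"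

lemma crit: assumes "Suc j < N" shows "root j < crit j" "crit j < root (Suc j)" "dS (crit j) = 0"
proof -
  have lt: "root j < root (Suc j)" using root_less assms by auto
  then obtain x where "root j < x" "x < root (Suc j)"
      "poly S (root (Suc j)) - poly S (root j) = (root (Suc j) - root j) * dS x"
    using poly_MVT by blast
  with lt assms have "\<exists>x. root j < x \<and> x < root (Suc j) \<and> dS x = 0"
    by (auto simp: poly_root)
  then show "root j < crit j" "crit j < root (Suc j)" "dS (crit j) = 0"
    using someI_ex unfolding crit_def by (metis (mono_tags, lifting))+
qed

lemma crit_less: assumes "i < j" "Suc j < N" shows "crit i < crit j"
proof -
  have "crit i < root (Suc i)" using crit(2)[of i] assms by auto
  also have "root (Suc i) \<le> root j" using root_le assms by auto
  also have "root j < crit j" using crit(1) assms by auto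
  finally show ?thesis .
qed

lemma crit_le: "i \<le> j \<Longrightarrow> Suc j < N \<Longrightarrow> crit i \<le> crit j"
  using crit_less[of i j] by (cases "i = j") auto

lemma dS_zero_imp_crit: assumes "dS x = 0" shows "\<exists>j. Suc j < N \<and> x = crit j"
proof (rule ccontr)
  assume not_crit: "\<not> ?thesis"
  have deg: "degree (pderiv S) = N - 1" using degree_S by (simp add: degree_pderiv)
  have nz: "pderiv S \<noteq> 0" using deg N2 by (auto simp: pderiv_eq_0_iff degree_S)
  have inj: "inj_on crit {..<N-1}"
    by (intro inj_onI) (metis crit_less lessThan_iff less_diff_conv nat_neq_iff less_irrefl Suc_eq_plus1)
  have "x \<notin> crit ` {..<N-1}" using not_crit by force
  then have "N = card (insert x (crit ` {..<N-1}))"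
    using card_image[OF inj] N2 by simp
  also have "\<dots> \<le> card {x. dS x = 0}"
    using assms crit(3) by (intro card_mono poly_roots_finite[OF nz]) auto
  also have "\<dots> \<le> N - 1"
    using card_poly_roots_bound[OF nz] deg by simp
  finally show False using N2 by simp
qed

definition piece :: "nat \<Rightarrow> real \<Rightarrow> bool" where
  "piece j x \<longleftrightarrow> (j = 0 \<or> crit (j - 1) \<le> x) \<and> (Suc j = N \<or> x \<le> crit j)"

definition inner_piece :: "nat \<Rightarrow> real \<Rightarrow> bool" where
  "inner_piece j x \<longleftrightarrow> (j = 0 \<or> crit (j - 1) < x) \<and> (Suc j = N \<or> x < crit j)"

lemma inner_piece_imp_piece: "inner_piece j x \<Longrightarrow> piece j x"
  by (auto simp: inner_piece_def piece_def)

lemma piece_between: "piece j a \<Longrightarrow> piece j b \<Longrightarrow> a \<le> x \<Longrightarrow> x \<le> b \<Longrightarrow> piece j x"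
  by (auto simp: piece_def)

lemma inner_piece_between: "piece j a \<Longrightarrow> piece j b \<Longrightarrow> a < x \<Longrightarrow> x < b \<Longrightarrow> inner_piece j x"
  by (auto simp: piece_def inner_piece_def)

lemma piece_crit_left: "Suc j < N \<Longrightarrow> piece j (crit j)"
  using crit_le[of "j - 1" j] by (auto simp: piece_def)

lemma piece_crit_right: "Suc j < N \<Longrightarrow> piece (Suc j) (crit j)"
  using crit_le[of j "Suc j"] by (cases "Suc (Suc j) < N") (auto simp: piece_def)

lemma piece_order: assumes "i < j" "j < N" "piece i x" "piece j y" shows "x \<le> y"
proof -
  have "x \<le> crit i" using assms by (auto simp: piece_def)
  also have "crit i \<le> crit (j - 1)" using assms by (intro crit_le) auto
  also have "crit (j - 1) \<le> y" using assms by (auto simp: piece_def)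
  finally show ?thesis .
qed

lemma inner_piece_root: assumes "j < N" shows "inner_piece j (root j)"
proof -
  have "j = 0 \<or> crit (j - 1) < root j" using crit(2)[of "j - 1"] assms by (cases j) auto
  moreover have "Suc j = N \<or> root j < crit j" using crit(1)[of j] assms by (cases "Suc j < N") auto
  ultimately show ?thesis by (simp add: inner_piece_def)
qed

lemma piece_root: "j < N \<Longrightarrow> piece j (root j)"
  by (simp add: inner_piece_imp_piece inner_piece_root)

lemma dS_nonzero_inner_piece: assumes "j < N" "inner_piece j x" shows "dS x \<noteq> 0"
proof
  assume "dS x = 0"
  then obtain i where i: "Suc i < N" "x = crit i" using dS_zero_imp_crit by blast
  show False
  proof (cases "i < j")
    case True
    then have "j \<noteq> 0" "crit i \<le> crit (j - 1)" using crit_le[of i "j - 1"] assms by auto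
    then show False using assms(2) i by (auto simp: inner_piece_def)
  next
    case False
    then have "Suc j \<noteq> N" "crit j \<le> crit i" using crit_le[of j i] i by auto
    then show False using assms(2) i by (auto simp: inner_piece_def)
  qed
qed

lemma piece_imp_inner_piece: assumes "j < N" "piece j x" "dS x \<noteq> 0" shows "inner_piece j x"
proof -
  have "x \<noteq> crit i" if "Suc i < N" for i using crit(3)[OF that] assms(3) by auto
  then have "j = 0 \<or> crit (j - 1) \<noteq> x" "Suc j = N \<or> crit j \<noteq> x"
    using assms(1) by (metis Suc_pred' not_less_eq gr0I, metis Suc_lessI)
  then have "j = 0 \<or> crit (j - 1) < x" "Suc j = N \<or> x < crit j"
    using assms(2) unfolding piece_def by auto
  then show ?thesis by (simp add: inner_piece_def)
qed

lemma dS_sign_const: assumes "j < N" "inner_piece j x" "inner_piece j y" shows "dS x * dS y > 0"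
proof -
  have no_change: False if ab: "a < b" "inner_piece j a" "inner_piece j b" "dS a * dS b < 0" for a b
  proof -
    obtain t where t: "a < t" "t < b" "dS t = 0" using poly_IVT[OF ab(1,4)] by auto
    then have "inner_piece j t" using ab by (auto simp: inner_piece_def)
    with t(3) assms(1) show False using dS_nonzero_inner_piece by blast
  qed
  have "\<not> dS x * dS y < 0"
    using no_change[of x y] no_change[of y x] assms
    by (cases x y rule: linorder_cases) (auto simp: mult.commute not_square_less_zero)
  moreover have "dS x * dS y \<noteq> 0" using dS_nonzero_inner_piece assms by auto
  ultimately show ?thesis by linarith
qed

lemma piece_MVT: assumes "piece j x" "piece j y" "x < y"
  shows "\<exists>t. inner_piece j t \<and> poly S y - poly S x = (y - x) * dS t"
  using poly_MVT[OF assms(3)] inner_piece_between[OF assms(1,2)] by blast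

lemma sign_dS_first_piece: assumes "inner_piece 0 x" shows "dS x < 0"
proof -
  obtain X where X: "\<forall>x\<le>X. poly S x > 2" using large_at_bot by blast
  define a where "a = min X (root 0 - 1)"
  have a: "a < root 0" "piece 0 a" "poly S a > 2"
    using crit(1)[of 0] N2 X by (auto simp: piece_def a_def)
  obtain t where t: "inner_piece 0 t" "poly S (root 0) - poly S a = (root 0 - a) * dS t"
    using piece_MVT[OF a(2) piece_root a(1)] N2 by auto
  then have "(root 0 - a) * dS t < 0" using a(3) poly_root[of 0] N2 by simp
  then have "dS t < 0" using a(1) by (simp add: mult_less_0_iff)
  moreover have "dS x * dS t > 0" using dS_sign_const[of 0 x t] assms t(1) N2 by auto
  ultimately show ?thesis using neg_one_power_sign[of "dS x" "dS t" 0] by simp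
qed

lemma sign_dS_next_piece:
  assumes j: "Suc j < N" and IH: "\<And>x. inner_piece j x \<Longrightarrow> (-1) ^ j * dS x < 0"
    and x: "inner_piece (Suc j) x"
  shows "(-1) ^ Suc j * dS x < 0"
proof -
  obtain t where t: "inner_piece j t" "poly S (crit j) - poly S (root j) = (crit j - root j) * dS t"
    using piece_MVT[OF piece_root piece_crit_left[OF j] crit(1)[OF j]] j by auto
  have "poly S (crit j) = (crit j - root j) * dS t" using t(2) poly_root[of j] j by simp
  then have "(-1) ^ j * poly S (crit j) = (crit j - root j) * ((-1) ^ j * dS t)"
    by (simp only: mult_ac)
  moreover have "(crit j - root j) * ((-1) ^ j * dS t) < 0"
    using IH[OF t(1)] crit(1)[OF j] by (rule_tac mult_pos_neg) simp_all
  ultimately have crit_sign: "(-1) ^ j * poly S (crit j) < 0" by linarith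
  obtain t' where t': "inner_piece (Suc j) t'"
      "poly S (root (Suc j)) - poly S (crit j) = (root (Suc j) - crit j) * dS t'"
    using piece_MVT[OF piece_crit_right[OF j] piece_root crit(2)[OF j]] j by auto
  have "poly S (crit j) = - ((root (Suc j) - crit j) * dS t')" using t'(2) poly_root[OF j] by simp
  then have "(-1) ^ j * poly S (crit j) = (root (Suc j) - crit j) * ((-1) ^ Suc j * dS t')"
    by simp
  then have "(-1) ^ Suc j * dS t' < 0"
    using crit_sign crit(2)[OF j] by (simp add: zero_less_mult_iff)
  then show ?thesis using neg_one_power_sign dS_sign_const[OF j x t'(1)] by blast
qed

lemma sign_dS_piece: "j < N \<Longrightarrow> inner_piece j x \<Longrightarrow> (-1) ^ j * dS x < 0"
proof (induction j arbitrary: x)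
  case 0
  then show ?case using sign_dS_first_piece by simp
next
  case (Suc j)
  then show ?case using sign_dS_next_piece by simp
qed

lemma piece_strict_antimono: assumes "j < N" "piece j x" "piece j y" "x < y"
  shows "(-1) ^ j * poly S y < (-1) ^ j * poly S x"
proof -
  obtain t where t: "inner_piece j t" "poly S y - poly S x = (y - x) * dS t"
    using piece_MVT[OF assms(2-4)] by blast
  have "(-1) ^ j * poly S y - (-1) ^ j * poly S x = (-1) ^ j * (poly S y - poly S x)"
    by (simp add: right_diff_distrib)
  also have "\<dots> = (y - x) * ((-1) ^ j * dS t)"
    unfolding t(2) by (simp only: mult_ac)
  also have "\<dots> < 0" using sign_dS_piece[OF assms(1) t(1)] assms(4) by (simp add: mult_pos_neg)
  finally show ?thesis by simp
qed

lemma piece_inj: assumes "j < N" "piece j x" "piece j y" "poly S x = poly S y" shows "x = y"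
  using piece_strict_antimono[OF assms(1,2,3)] piece_strict_antimono[OF assms(1,3,2)] assms(4)
  by (cases x y rule: linorder_cases) auto

lemma crit_value: assumes "Suc j < N" shows "(-1) ^ j * poly S (crit j) \<le> -2"
proof -
  have "(-1) ^ j * poly S (crit j) < (-1) ^ j * poly S (root j)"
    using piece_strict_antimono[OF _ piece_root piece_crit_left crit(1)] assms by auto
  then have "(-1) ^ j * poly S (crit j) < 0" using poly_root[of j] assms by simp
  moreover have "\<not> \<bar>poly S (crit j)\<bar> < 2" using pderiv_nonzero_inside crit(3)[OF assms] by blast
  then have "\<bar>(-1) ^ j * poly S (crit j)\<bar> \<ge> 2" by (simp add: abs_neg_one_power_mult)
  ultimately show ?thesis by linarith
qed

lemma piece_exists: "\<exists>j<N. piece j x"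
proof (cases "\<exists>i. Suc i < N \<and> x \<le> crit i")
  case True
  define j where "j = (LEAST i. Suc i < N \<and> x \<le> crit i)"
  have j: "Suc j < N" "x \<le> crit j" using LeastI_ex[OF True] unfolding j_def by auto
  have "j = 0 \<or> crit (j - 1) \<le> x"
    using not_less_Least[of "j - 1" "\<lambda>i. Suc i < N \<and> x \<le> crit i"] j unfolding j_def[symmetric]
    by (cases j) auto
  then show ?thesis using j by (intro exI[of _ j]) (auto simp: piece_def)
next
  case False
  then have "N - 1 = 0 \<or> crit (N - 1 - 1) \<le> x"
    by (cases "N - 1") (auto simp: not_le less_imp_le)
  then show ?thesis using N2 by (intro exI[of _ "N - 1"]) (auto simp: piece_def)
qed

lemma piece_ends:
  assumes "j < N"
  obtains l r where "piece j l" "piece j r" "(-1) ^ j * poly S l \<ge> 2" "(-1) ^ j * poly S r \<le> -2"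
proof -
  obtain l where l: "piece j l" "(-1) ^ j * poly S l \<ge> 2"
  proof (cases j)
    case 0
    obtain X where X: "\<forall>x\<le>X. poly S x > 2" using large_at_bot by blast
    define a where "a = min X (root 0 - 1)"
    have "piece 0 a" using crit(1)[of 0] N2 by (auto simp: piece_def a_def)
    moreover have "poly S a > 2" using X by (simp add: a_def)
    ultimately show ?thesis using that 0 by auto
  next
    case (Suc k)
    then show ?thesis using that crit_value[of k] piece_crit_right[of k] assms by force
  qed
  obtain r where r: "piece j r" "(-1) ^ j * poly S r \<le> -2"
  proof (cases "Suc j = N")
    case True
    obtain Y where Y: "\<forall>x\<ge>Y. (-1) ^ N * poly S x > 2" using large_at_top by blast
    define a where "a = max Y (root j + 1)"
    have "j = 0 \<or> crit (j - 1) \<le> a"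
      using crit(2)[of "j - 1"] assms by (cases j) (auto simp: a_def)
    then have "piece j a" using True by (auto simp: piece_def)
    moreover have "(-1) ^ N * poly S a > 2" using Y by (simp add: a_def)
    then have "(-1) ^ j * poly S a < -2" using True[symmetric] by simp
    ultimately show ?thesis using that by force
  next
    case False
    then show ?thesis using that crit_value[of j] piece_crit_left[of j] assms by force
  qed
  from l r show ?thesis using that by blast
qed

definition level :: "real \<Rightarrow> nat \<Rightarrow> real" where
  "level c j = (SOME x. piece j x \<and> poly S x = c)"

lemma level: assumes "j < N" "\<bar>c\<bar> \<le> 2" shows "piece j (level c j)" "poly S (level c j) = c"
proof -
  obtain l r where lr: "piece j l" "piece j r" "(-1) ^ j * poly S l \<ge> 2" "(-1) ^ j * poly S r \<le> -2"
    using piece_ends[OF assms(1)] .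
  have "l < r"
    using piece_strict_antimono[OF assms(1) lr(2,1)] lr(3,4) by (cases l r rule: linorder_cases) auto
  have c: "-2 \<le> (-1) ^ j * c" "(-1) ^ j * c \<le> 2" using assms(2) by (cases "even j"; simp)+
  have "\<exists>x. l \<le> x \<and> x \<le> r \<and> (\<lambda>x. (-1) ^ j * poly S x) x = (-1) ^ j * c"
    by (rule IVT2') (use lr c \<open>l < r\<close> in \<open>auto intro!: continuous_intros\<close>)
  then obtain x where x: "l \<le> x" "x \<le> r" "(-1) ^ j * poly S x = (-1) ^ j * c" by auto
  then have "piece j x \<and> poly S x = c" using piece_between[OF lr(1,2)] by simp
  then show "piece j (level c j)" "poly S (level c j) = c"
    unfolding level_def by (metis (mono_tags, lifting) someI_ex)+
qed

lemma level_unique: "j < N \<Longrightarrow> \<bar>c\<bar> \<le> 2 \<Longrightarrow> piece j x \<Longrightarrow> poly S x = c \<Longrightarrow> x = level c j"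
  using level[of j c] piece_inj[of j x "level c j"] by auto

lemma level_le_Suc: "Suc j < N \<Longrightarrow> \<bar>c\<bar> \<le> 2 \<Longrightarrow> level c j \<le> level c (Suc j)"
  using piece_order[of j "Suc j" "level c j" "level c (Suc j)"] level[of j c] level[of "Suc j" c] by auto

lemma level_strict_mono:
  assumes "j < N" "-2 \<le> c" "c < c'" "c' \<le> 2"
  shows "(even j \<longrightarrow> level c' j < level c j) \<and> (odd j \<longrightarrow> level c j < level c' j)"
proof -
  have "\<bar>c\<bar> \<le> 2" "\<bar>c'\<bar> \<le> 2" using assms by auto
  note l = level[OF assms(1) this(1)] and l' = level[OF assms(1) this(2)]
  have "level c j \<noteq> level c' j" using l(2) l'(2) assms(3) by auto
  then show ?thesis
    using piece_strict_antimono[OF assms(1) l(1) l'(1)] piece_strict_antimono[OF assms(1) l'(1) l(1)]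
      l(2) l'(2) assms(3)
    by (cases "even j") (auto simp: linorder_neq_iff)
qed

lemma pieces_at_crit: assumes "Suc i < N" shows "{j. j < N \<and> piece j (crit i)} = {i, Suc i}"
proof (intro set_eqI iffI)
  fix j assume j: "j \<in> {j. j < N \<and> piece j (crit i)}"
  have False if "j < i"
    using j that assms crit_less[of j i] by (auto simp: piece_def)
  moreover have False if "Suc i < j"
  proof -
    have "crit i < crit (j - 1)" using j that by (intro crit_less) auto
    then show False using j that by (auto simp: piece_def)
  qed
  ultimately show "j \<in> {i, Suc i}" by force
qed (use assms piece_crit_left piece_crit_right in auto)

lemma piece_unique_off_crit:
  assumes "\<forall>i. Suc i < N \<longrightarrow> x \<noteq> crit i" "i < N" "j < N" "piece i x" "piece j x"
  shows "i = j"
proof -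
  have False if "a < b" "b < N" "piece a x" "piece b x" for a b
  proof -
    have "x \<le> crit a" "crit (b - 1) \<le> x" "crit a \<le> crit (b - 1)"
      using that by (auto simp: piece_def intro: crit_le)
    then have "x = crit a" by linarith
    then show False using assms(1) that by auto
  qed
  then show ?thesis using assms(2-5) by (metis linorder_neqE_nat)
qed

lemma card_level: assumes "\<bar>c\<bar> \<le> 2" "poly S x = c"
  shows "card {j. j < N \<and> level c j = x} = (if dS x = 0 then 2 else 1)"
proof -
  have eq: "{j. j < N \<and> level c j = x} = {j. j < N \<and> piece j x}"
    using level[OF _ assms(1)] level_unique[OF _ assms(1) _ assms(2)] by blast
  show ?thesis
  proof (cases "dS x = 0")
    case True
    then obtain i where "Suc i < N" "x = crit i" using dS_zero_imp_crit by blast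
    then show ?thesis using True eq pieces_at_crit by simp
  next
    case False
    then have off: "\<forall>i. Suc i < N \<longrightarrow> x \<noteq> crit i" using crit(3) by auto
    obtain j where "j < N" "piece j x" using piece_exists by blast
    then have "{j. j < N \<and> piece j x} = {j}" using piece_unique_off_crit[OF off] by blast
    then show ?thesis using False eq by simp
  qed
qed

definition band_lo :: "nat \<Rightarrow> real" where "band_lo j = level ((-1) ^ j * 2) j"
definition band_hi :: "nat \<Rightarrow> real" where "band_hi j = level (- ((-1) ^ j * 2)) j"

lemma band_ends: assumes "j < N"
  shows "piece j (band_lo j)" "(-1) ^ j * poly S (band_lo j) = 2"
    "piece j (band_hi j)" "(-1) ^ j * poly S (band_hi j) = -2"
  using level[OF assms, of "(-1) ^ j * 2"] level[OF assms, of "- ((-1) ^ j * 2)"]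
  unfolding band_lo_def band_hi_def by (auto simp: abs_mult)

lemma band_lo_less_hi: assumes "j < N" shows "band_lo j < band_hi j"
  using band_ends[OF assms] piece_strict_antimono[OF assms, of "band_hi j" "band_lo j"]
  by (cases "band_lo j" "band_hi j" rule: linorder_cases) auto

lemma level_pm2_max_min: assumes "j < N"
  shows "max (level 2 j) (level (-2) j) = band_hi j" "min (level 2 j) (level (-2) j) = band_lo j"
proof -
  have "band_lo j < band_hi j" by (rule band_lo_less_hi[OF assms])
  then show "max (level 2 j) (level (-2) j) = band_hi j" "min (level 2 j) (level (-2) j) = band_lo j"
    unfolding band_lo_def band_hi_def by (cases "even j"; simp add: max_def min_def)+
qed

lemma band_hi_le_outside:
  assumes "j < N" "level 0 j < r" "\<bar>poly S r\<bar> \<ge> 2" shows "band_hi j \<le> r"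
proof (rule ccontr)
  assume "\<not> band_hi j \<le> r"
  note b = band_ends[OF assms(1)] and l = level[OF assms(1), of 0]
  have r: "piece j r" using piece_between[OF l(1) b(3)] assms(2) \<open>\<not> band_hi j \<le> r\<close> by auto
  have "(-1) ^ j * poly S r < 0" "(-1) ^ j * poly S (band_hi j) < (-1) ^ j * poly S r"
    using piece_strict_antimono[OF assms(1) l(1) r assms(2)] l(2)
      piece_strict_antimono[OF assms(1) r b(3)] \<open>\<not> band_hi j \<le> r\<close> by auto
  then show False using b(4) assms(3) abs_neg_one_power_mult[of j "poly S r"] by linarith
qed

lemma le_band_lo_outside:
  assumes "j < N" "r < level 0 j" "\<bar>poly S r\<bar> \<ge> 2" shows "r \<le> band_lo j"
proof (rule ccontr)
  assume "\<not> r \<le> band_lo j"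
  note b = band_ends[OF assms(1)] and l = level[OF assms(1), of 0]
  have r: "piece j r" using piece_between[OF b(1) l(1)] assms(2) \<open>\<not> r \<le> band_lo j\<close> by auto
  have "0 < (-1) ^ j * poly S r" "(-1) ^ j * poly S r < (-1) ^ j * poly S (band_lo j)"
    using piece_strict_antimono[OF assms(1) r l(1) assms(2)] l(2)
      piece_strict_antimono[OF assms(1) b(1) r] \<open>\<not> r \<le> band_lo j\<close> by auto
  then show False using b(2) assms(3) abs_neg_one_power_mult[of j "poly S r"] by linarith
qed

lemma level0_less_Suc: assumes "Suc j < N" shows "level 0 j < level 0 (Suc j)"
proof -
  note l = level[OF Suc_lessD[OF assms], of 0] level[OF assms, of 0]
  have "dS (level 0 j) \<noteq> 0" using l(2) pderiv_nonzero_inside by simp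
  then have "level 0 j \<noteq> level 0 (Suc j)"
    using piece_unique_off_crit[of "level 0 j" j "Suc j"] l assms crit(3) by force
  then show ?thesis using level_le_Suc[OF assms, of 0] by simp
qed

lemma dS_level0_sign_change: assumes "Suc j < N" shows "dS (level 0 j) * dS (level 0 (Suc j)) < 0"
proof -
  have inner: "inner_piece j (level 0 j)" "inner_piece (Suc j) (level 0 (Suc j))"
    using level[of j 0] level[OF assms, of 0] assms pderiv_nonzero_inside
    by (auto intro!: piece_imp_inner_piece)
  have "((-1) ^ j * dS (level 0 j)) * ((-1) ^ j * dS (level 0 (Suc j))) < 0"
    using sign_dS_piece[OF _ inner(1)] sign_dS_piece[OF assms inner(2)] assms
    by (rule_tac mult_neg_pos) auto
  then show ?thesis by (cases "even j") auto
qed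

lemma gap_has_root:
  fixes H :: "real poly"
  assumes H: "\<And>x. \<bar>poly S x\<bar> < 2 \<Longrightarrow> poly H x * dS x > 0" and j: "Suc j < N"
  shows "\<exists>r. poly H r = 0 \<and> band_hi j \<le> r \<and> r \<le> band_lo (Suc j)"
proof -
  define x1 where "x1 = level 0 j"
  define x2 where "x2 = level 0 (Suc j)"
  have "poly S x1 = 0" "poly S x2 = 0" using level j by (auto simp: x1_def x2_def)
  then have "(poly H x1 * dS x1) * (poly H x2 * dS x2) > 0" using H by simp
  then have "poly H x1 * poly H x2 < 0"
    using dS_level0_sign_change[OF j] unfolding x1_def[symmetric] x2_def[symmetric]
    by (auto simp: zero_less_mult_iff mult_less_0_iff)
  moreover have "x1 < x2" using level0_less_Suc[OF j] by (simp add: x1_def x2_def)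
  ultimately obtain r where r: "x1 < r" "r < x2" "poly H r = 0" using poly_IVT by blast
  have "\<bar>poly S r\<bar> \<ge> 2" using H[of r] r(3) by force
  then show ?thesis
    using r band_hi_le_outside[of j r] le_band_lo_outside[OF j, of r] j by (auto simp: x1_def x2_def)
qed

end

section \<open>Fundamental solutions and Green's identity\<close>

locale sl_recursion =
  fixes f q w :: "nat \<Rightarrow> real"
begin

definition pot :: "nat \<Rightarrow> real poly" where "pot n = [:q n, - w n:]"
definition inv_f :: "nat \<Rightarrow> real poly" where "inv_f n = [:1 / f n:]"

text \<open>\<open>(phi n, phi_qd n)\<close> and \<open>(psi n, psi_qd n)\<close> are \<open>(y\<^sub>n, f\<^sub>n \<Delta>y\<^sub>n)\<close> for the solutions with
  initial data \<open>(1, 0)\<close> and \<open>(0, 1)\<close>, as polynomials in \<open>\<lambda>\<close>.\<close>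

fun phi :: "nat \<Rightarrow> real poly" and phi_qd :: "nat \<Rightarrow> real poly" where
  "phi 0 = 1"
| "phi_qd 0 = 0"
| "phi (Suc n) = phi n + inv_f n * phi_qd n"
| "phi_qd (Suc n) = phi_qd n + pot (Suc n) * (phi n + inv_f n * phi_qd n)"

fun psi :: "nat \<Rightarrow> real poly" and psi_qd :: "nat \<Rightarrow> real poly" where
  "psi 0 = 0"
| "psi_qd 0 = 1"
| "psi (Suc n) = psi n + inv_f n * psi_qd n"
| "psi_qd (Suc n) = psi_qd n + pot (Suc n) * (psi n + inv_f n * psi_qd n)"

lemma phi_qd_Suc: "phi_qd (Suc n) = phi_qd n + pot (Suc n) * phi (Suc n)"
  by simp

lemma psi_qd_Suc: "psi_qd (Suc n) = psi_qd n + pot (Suc n) * psi (Suc n)"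
  by simp

declare phi.simps(2) [simp del] psi.simps(2) [simp del]
  phi_qd.simps(2) [simp del] psi_qd.simps(2) [simp del]

lemma wronskian: "phi n * psi_qd n - psi n * phi_qd n = 1"
proof (induction n)
  case (Suc n)
  then show ?case
    unfolding phi_qd_Suc psi_qd_Suc phi.simps(2) psi.simps(2) by algebra
qed simp

definition gram11 :: "nat \<Rightarrow> real poly" where "gram11 n = (\<Sum>k\<in>{1..n}. [:w k:] * phi k * phi k)"
definition gram12 :: "nat \<Rightarrow> real poly" where "gram12 n = (\<Sum>k\<in>{1..n}. [:w k:] * phi k * psi k)"
definition gram22 :: "nat \<Rightarrow> real poly" where "gram22 n = (\<Sum>k\<in>{1..n}. [:w k:] * psi k * psi k)"

lemma gram_Suc:
  "gram11 (Suc n) = gram11 n + [:w (Suc n):] * phi (Suc n) * phi (Suc n)"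
  "gram12 (Suc n) = gram12 n + [:w (Suc n):] * phi (Suc n) * psi (Suc n)"
  "gram22 (Suc n) = gram22 n + [:w (Suc n):] * psi (Suc n) * psi (Suc n)"
  by (simp_all add: gram11_def gram12_def gram22_def)

lemma pderiv_pot: "pderiv (pot n) = - [:w n:]"
  by (simp add: pot_def pderiv_pCons)

lemma pderiv_inv_f: "pderiv (inv_f n) = 0"
  by (simp add: inv_f_def)

lemma pderiv_fundamental:
  "pderiv (phi n) = phi n * gram12 n - psi n * gram11 n \<and>
   pderiv (psi n) = phi n * gram22 n - psi n * gram12 n \<and>
   pderiv (phi_qd n) = phi_qd n * gram12 n - psi_qd n * gram11 n \<and>
   pderiv (psi_qd n) = phi_qd n * gram22 n - psi_qd n * gram12 n"
proof (induction n)
  case 0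
  then show ?case by (simp add: gram11_def gram12_def gram22_def)
next
  case (Suc n)
  then have IH: "pderiv (phi n) = phi n * gram12 n - psi n * gram11 n"
    "pderiv (psi n) = phi n * gram22 n - psi n * gram12 n"
    "pderiv (phi_qd n) = phi_qd n * gram12 n - psi_qd n * gram11 n"
    "pderiv (psi_qd n) = phi_qd n * gram22 n - psi_qd n * gram12 n" by auto
  note W = wronskian[of n]
  show ?case
    unfolding gram_Suc phi_qd_Suc psi_qd_Suc phi.simps(2) psi.simps(2)
    by (simp only: pderiv_add pderiv_mult pderiv_inv_f pderiv_pot IH) (use W in algebra)
qed

lemma fundamental_degree_coeff:
  assumes "\<forall>k\<le>m. f k \<noteq> 0"
  defines "F \<equiv> \<Prod>k<Suc m. f k"
  shows "degree (phi (Suc m)) \<le> m \<and> coeff (phi (Suc m)) m = (-1) ^ m * (\<Prod>k=1..m. w k) * f 0 / F \<and>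
         degree (psi (Suc m)) \<le> m \<and> coeff (psi (Suc m)) m = (-1) ^ m * (\<Prod>k=1..m. w k) / F \<and>
         degree (phi_qd (Suc m)) \<le> Suc m \<and>
         coeff (phi_qd (Suc m)) (Suc m) = (-1) ^ Suc m * (\<Prod>k=1..Suc m. w k) * f 0 / F \<and>
         degree (psi_qd (Suc m)) \<le> Suc m \<and>
         coeff (psi_qd (Suc m)) (Suc m) = (-1) ^ Suc m * (\<Prod>k=1..Suc m. w k) / F"
  using assms(1) unfolding F_def
proof (induction m)
  case 0
  then have "f 0 \<noteq> 0" by auto
  then show ?case
    by (simp add: phi.simps psi.simps phi_qd.simps psi_qd.simps inv_f_def pot_def one_pCons)
next
  case (Suc m)
  have f: "\<forall>k\<le>m. f k \<noteq> 0" "f (Suc m) \<noteq> 0" using Suc.prems by auto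
  note IH = Suc.IH[OF f(1)]
  have "(\<Prod>k<Suc m. f k) \<noteq> 0" using f(1) by simp
  have mult_inv_f: "inv_f n * p = smult (1 / f n) p" for n p by (simp add: inv_f_def)
  have mult_pot: "pot n * p = smult (q n) p + pCons 0 (smult (- w n) p)" for n p
    by (simp add: pot_def)
  have dA: "degree (phi (Suc (Suc m))) \<le> Suc m" and dB: "degree (psi (Suc (Suc m))) \<le> Suc m"
    unfolding phi.simps(2)[of "Suc m"] psi.simps(2)[of "Suc m"] mult_inv_f using IH
    by (auto intro!: degree_add_le order.trans[OF degree_smult_le])
  have cA: "coeff (phi (Suc (Suc m))) (Suc m) = coeff (phi_qd (Suc m)) (Suc m) / f (Suc m)"
    and cB: "coeff (psi (Suc (Suc m))) (Suc m) = coeff (psi_qd (Suc m)) (Suc m) / f (Suc m)"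
    unfolding phi.simps(2)[of "Suc m"] psi.simps(2)[of "Suc m"] mult_inv_f using IH
    by (simp_all add: coeff_eq_0)
  have "degree (phi_qd (Suc (Suc m))) \<le> Suc (Suc m)" "degree (psi_qd (Suc (Suc m))) \<le> Suc (Suc m)"
    unfolding phi_qd_Suc[of "Suc m"] psi_qd_Suc[of "Suc m"] mult_pot using IH dA dB
    by (auto intro!: degree_add_le order.trans[OF degree_smult_le] simp: degree_pCons_le)
  moreover have
    "coeff (phi_qd (Suc (Suc m))) (Suc (Suc m)) = - w (Suc (Suc m)) * coeff (phi (Suc (Suc m))) (Suc m)"
    "coeff (psi_qd (Suc (Suc m))) (Suc (Suc m)) = - w (Suc (Suc m)) * coeff (psi (Suc (Suc m))) (Suc m)"
    unfolding phi_qd_Suc[of "Suc m"] psi_qd_Suc[of "Suc m"] mult_pot using IH dA dB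
    by (simp_all add: coeff_eq_0)
  ultimately show ?case using dA dB cA cB IH f \<open>(\<Prod>k<Suc m. f k) \<noteq> 0\<close>
    by (simp add: prod.cl_ivl_Suc field_simps)
qed

end

definition lagrange_bracket :: "complex \<Rightarrow> complex \<Rightarrow> complex" where
  "lagrange_bracket a b = cnj a * b - cnj b * a"

lemma lagrange_bracket_real_lincomb:
  fixes m11 m12 m21 m22 :: real
  shows "lagrange_bracket (of_real m11 * v1 + of_real m12 * v2) (of_real m21 * v1 + of_real m22 * v2) =
    of_real (m11 * m22 - m12 * m21) * lagrange_bracket v1 v2"
  unfolding lagrange_bracket_def by (simp add: algebra_simps)

lemma lagrange_bracket_mult_ii: "lagrange_bracket (\<i> * a) (\<i> * b) = lagrange_bracket a b"
  unfolding lagrange_bracket_def by (simp add: algebra_simps)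

context sl_recursion
begin

definition csol :: "complex \<Rightarrow> complex \<Rightarrow> complex \<Rightarrow> nat \<Rightarrow> complex" where
  "csol z v1 v2 n = poly (cpoly (phi n)) z * v1 + poly (cpoly (psi n)) z * v2"

definition csol_qd :: "complex \<Rightarrow> complex \<Rightarrow> complex \<Rightarrow> nat \<Rightarrow> complex" where
  "csol_qd z v1 v2 n = poly (cpoly (phi_qd n)) z * v1 + poly (cpoly (psi_qd n)) z * v2"

lemma csol_0: "csol z v1 v2 0 = v1" and csol_qd_0: "csol_qd z v1 v2 0 = v2"
  by (simp_all add: csol_def csol_qd_def)

lemma csol_Suc: "csol z v1 v2 (Suc n) = csol z v1 v2 n + of_real (1 / f n) * csol_qd z v1 v2 n"
  by (simp add: csol_def csol_qd_def phi.simps(2) psi.simps(2) inv_f_def algebra_simps)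

lemma csol_qd_Suc:
  "csol_qd z v1 v2 (Suc n) =
     csol_qd z v1 v2 n + (of_real (q (Suc n)) - z * of_real (w (Suc n))) * csol z v1 v2 (Suc n)"
  unfolding csol_def csol_qd_def phi_qd_Suc psi_qd_Suc by (simp add: pot_def algebra_simps)

lemma green_identity:
  "lagrange_bracket (csol z v1 v2 n) (csol_qd z v1 v2 n) =
     lagrange_bracket v1 v2 - (z - cnj z) * (\<Sum>k\<in>{1..n}. of_real (w k) * (cnj (csol z v1 v2 k) * csol z v1 v2 k))"
proof (induction n)
  case (Suc n)
  define y where "y = csol z v1 v2 n"
  define u where "u = csol_qd z v1 v2 n"
  define r where "r = (of_real (1 / f n) :: complex)"
  define a where "a = (of_real (q (Suc n)) - z * of_real (w (Suc n)) :: complex)"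
  have "cnj r = r" by (simp add: r_def)
  moreover have "cnj a = of_real (q (Suc n)) - cnj z * of_real (w (Suc n))" by (simp add: a_def)
  ultimately have "lagrange_bracket (y + r * u) (u + a * (y + r * u)) =
      lagrange_bracket y u - (z - cnj z) * (of_real (w (Suc n)) * (cnj (y + r * u) * (y + r * u)))"
    unfolding lagrange_bracket_def by (simp add: a_def algebra_simps)
  moreover have "csol z v1 v2 (Suc n) = y + r * u" "csol_qd z v1 v2 (Suc n) = u + a * (y + r * u)"
    by (simp_all add: csol_Suc csol_qd_Suc y_def u_def r_def a_def)
  ultimately show ?case using Suc by (simp add: sum.cl_ivl_Suc y_def u_def algebra_simps)
qed (simp add: csol_0 csol_qd_0)

end

locale sl_problem = sl_recursion +
  fixes N :: nat
  assumes N2: "N \<ge> 2"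
    and f_nonzero: "\<forall>n\<le>N. f n \<noteq> 0"
    and w_pos: "\<forall>n\<in>{1..N}. w n > 0"
    and prod_inv_f_pos: "(\<Prod>i<N. 1 / f i) > 0"
begin

lemma weighted_sum_squares_eq_0:
  assumes "(\<Sum>k\<in>{1..N}. w k * (a k)\<^sup>2) = 0" shows "a 1 = 0" "a 2 = 0"
proof -
  have "\<forall>k\<in>{1..N}. w k * (a k)\<^sup>2 = 0"
    using assms w_pos sum_nonneg_eq_0_iff[of "{1..N}" "\<lambda>k. w k * (a k)\<^sup>2"]
    by (auto simp: less_imp_le)
  moreover have "1 \<in> {1..N}" "2 \<in> {1..N}" using N2 by auto
  ultimately show "a 1 = 0" "a 2 = 0" using w_pos by (metis less_irrefl mult_eq_0_iff power_eq_0_iff)+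
qed

lemma csol_trivial_if_1_2_zero:
  assumes "csol z v1 v2 1 = 0" "csol z v1 v2 2 = 0" shows "v1 = 0 \<and> v2 = 0"
proof -
  have "f 1 \<noteq> 0" using f_nonzero N2 by auto
  moreover have "csol z v1 v2 2 = csol z v1 v2 1 + of_real (1 / f 1) * csol_qd z v1 v2 1"
    using csol_Suc[of z v1 v2 1] by (simp add: numeral_2_eq_2)
  ultimately have "csol_qd z v1 v2 1 = 0" using assms by simp
  moreover have "csol_qd z v1 v2 1 = v2 + (of_real (q 1) - z * of_real (w 1)) * csol z v1 v2 1"
    using csol_qd_Suc[of z v1 v2 0] by (simp add: csol_qd_0)
  moreover have "csol z v1 v2 1 = v1 + of_real (1 / f 0) * v2"
    using csol_Suc[of z v1 v2 0] by (simp add: csol_0 csol_qd_0)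
  ultimately show ?thesis using assms by simp
qed

lemma csol_trivial_if_bracket_preserved:
  assumes "Im z \<noteq> 0"
    and "lagrange_bracket (csol z v1 v2 N) (csol_qd z v1 v2 N) = lagrange_bracket v1 v2"
  shows "v1 = 0 \<and> v2 = 0"
proof -
  have "(z - cnj z) * (\<Sum>k\<in>{1..N}. of_real (w k) * (cnj (csol z v1 v2 k) * csol z v1 v2 k)) = 0"
    using assms(2) green_identity[of z v1 v2 N] by (metis add_cancel_right_right eq_diff_eq)
  moreover have "z - cnj z \<noteq> 0" using assms(1) by (simp add: complex_eq_iff)
  moreover have "cnj y * y = of_real ((cmod y)\<^sup>2)" for y
    by (metis complex_norm_square mult.commute of_real_power)
  ultimately have "of_real (\<Sum>k\<in>{1..N}. w k * (cmod (csol z v1 v2 k))\<^sup>2) = (0 :: complex)"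
    by (simp only: mult_eq_0_iff of_real_sum of_real_mult simp_thms)
  then have "(\<Sum>k\<in>{1..N}. w k * (cmod (csol z v1 v2 k))\<^sup>2) = 0"
    by (simp only: of_real_eq_0_iff)
  then have "cmod (csol z v1 v2 1) = 0" "cmod (csol z v1 v2 2) = 0"
    by (rule weighted_sum_squares_eq_0)+
  then show ?thesis by (intro csol_trivial_if_1_2_zero) simp_all
qed

lemma prod_f_pos: "(\<Prod>k<N. f k) > 0"
proof -
  have "(\<Prod>i<N. 1 / f i) = inverse (\<Prod>k<N. f k)"
    using prod_inversef[of f "{..<N}"] by (simp add: o_def inverse_eq_divide)
  then show ?thesis using prod_inv_f_pos by simp
qed

lemma prod_w_pos: "n \<le> N \<Longrightarrow> (\<Prod>k=1..n. w k) > 0"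
  using w_pos by (intro prod_pos) auto

lemma fundamental_degree_coeff_N:
  "degree (phi N) \<le> N - 1 \<and> coeff (phi N) (N - 1) = (-1) ^ (N - 1) * (\<Prod>k=1..N-1. w k) * f 0 / (\<Prod>k<N. f k) \<and>
   degree (psi N) \<le> N - 1 \<and> coeff (psi N) (N - 1) = (-1) ^ (N - 1) * (\<Prod>k=1..N-1. w k) / (\<Prod>k<N. f k) \<and>
   degree (phi_qd N) \<le> N \<and> coeff (phi_qd N) N = (-1) ^ N * (\<Prod>k=1..N. w k) * f 0 / (\<Prod>k<N. f k) \<and>
   degree (psi_qd N) \<le> N \<and> coeff (psi_qd N) N = (-1) ^ N * (\<Prod>k=1..N. w k) / (\<Prod>k<N. f k)"
proof -
  have "Suc (N - 1) = N" using N2 by simp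
  then show ?thesis using fundamental_degree_coeff[of "N - 1"] f_nonzero by simp
qed

end

section \<open>The discriminant of a coupled boundary condition\<close>

text \<open>The \<open>mon\<close> polynomials are the entries of
  \<open>M\<^sup>-\<^sup>1 \<Phi>(\<lambda>)\<close>, where \<open>\<Phi> = ((phi N, psi N), (phi_qd N, psi_qd N))\<close> is the monodromy matrix;
  \<open>discr\<close> is its trace.\<close>

locale sl_coupled = sl_problem +
  fixes m11 m12 m21 m22 :: real
  assumes det_M: "m11 * m22 - m12 * m21 = 1"
begin

definition mon11 :: "real poly" where "mon11 = [:m22:] * phi N - [:m12:] * phi_qd N"
definition mon12 :: "real poly" where "mon12 = [:m22:] * psi N - [:m12:] * psi_qd N"
definition mon21 :: "real poly" where "mon21 = [:m11:] * phi_qd N - [:m21:] * phi N"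
definition mon22 :: "real poly" where "mon22 = [:m11:] * psi_qd N - [:m21:] * psi N"
definition discr :: "real poly" where "discr = mon11 + mon22"

lemma det_mon: "poly mon11 x * poly mon22 x - poly mon12 x * poly mon21 x = 1"
proof -
  have "[:m11:] * [:m22:] - [:m12:] * [:m21:] = (1 :: real poly)"
    using det_M by (simp add: one_pCons; simp add: algebra_simps)
  then have "mon11 * mon22 - mon12 * mon21 = 1"
    using wronskian[of N] unfolding mon11_def mon12_def mon21_def mon22_def by algebra
  from arg_cong[OF this, of "\<lambda>p. poly p x"] show ?thesis by simp
qed

lemma pderiv_discr: "pderiv discr = - mon12 * gram11 N + (mon11 - mon22) * gram12 N + mon21 * gram22 N"
proof -
  have "pderiv discr = [:m22:] * pderiv (phi N) - [:m12:] * pderiv (phi_qd N)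
      + [:m11:] * pderiv (psi_qd N) - [:m21:] * pderiv (psi N)"
    unfolding discr_def mon11_def mon22_def by (simp add: pderiv_add pderiv_diff pderiv_mult pderiv_smult)
  then show ?thesis
    using pderiv_fundamental[of N] unfolding mon11_def mon12_def mon21_def mon22_def by algebra
qed

definition band_form :: "real \<Rightarrow> real \<Rightarrow> real \<Rightarrow> real" where
  "band_form x y1 y2 = - poly mon12 x * y1\<^sup>2 + (poly mon11 x - poly mon22 x) * y1 * y2 + poly mon21 x * y2\<^sup>2"

lemma pderiv_discr_eq_sum:
  "poly (pderiv discr) x = (\<Sum>k\<in>{1..N}. w k * band_form x (poly (phi k) x) (poly (psi k) x))"
  unfolding pderiv_discr gram11_def gram12_def gram22_def band_form_def
  by (simp add: poly_sum sum_distrib_left sum_distrib_right sum.distrib[symmetric]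
      sum_subtractf[symmetric] algebra_simps power2_eq_square)

lemma band_form_square:
  "4 * poly mon21 x * band_form x y1 y2 =
     (2 * poly mon21 x * y2 + (poly mon11 x - poly mon22 x) * y1)\<^sup>2 - ((poly discr x)\<^sup>2 - 4) * y1\<^sup>2"
  using det_mon[of x] unfolding band_form_def discr_def by (simp add: algebra_simps power2_eq_square)

lemma phi_1: "phi 1 = 1" "phi (Suc 0) = 1"
  by (simp_all add: phi.simps)

lemma psi_2_minus_phi_2: "poly (psi 2) x - poly (phi 2) x * poly (psi 1) x = 1 / f 1"
proof -
  have "f 0 \<noteq> 0" "f 1 \<noteq> 0" using f_nonzero N2 by auto
  moreover have "psi 1 = [:1 / f 0:]" by (simp add: psi.simps inv_f_def)
  ultimately show ?thesis
    by (simp add: numeral_2_eq_2 phi.simps psi.simps phi_qd.simps psi_qd.simps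
        inv_f_def pot_def field_simps)
qed

lemma mon21_nonzero_inside: assumes "\<bar>poly discr x\<bar> < 2" shows "poly mon21 x \<noteq> 0"
proof
  assume "poly mon21 x = 0"
  then have "(poly discr x)\<^sup>2 - 4 = (poly mon11 x - poly mon22 x)\<^sup>2"
    using det_mon[of x] unfolding discr_def by (simp add: power2_eq_square algebra_simps)
  then have "4 \<le> (poly discr x)\<^sup>2" using zero_le_power2[of "poly mon11 x - poly mon22 x"] by linarith
  with assms show False using abs_le_square_iff[of 2 "poly discr x"] by simp
qed

lemma mon21_band_form_pos:
  assumes "\<bar>poly discr x\<bar> < 2" "y1 \<noteq> 0 \<or> y2 \<noteq> 0"
  shows "poly mon21 x * band_form x y1 y2 > 0"
proof -
  have disc: "(poly discr x)\<^sup>2 - 4 < 0"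
    using assms(1) abs_square_less_1[of "poly discr x / 2"] by (simp add: power_divide)
  have "4 * poly mon21 x * band_form x y1 y2 > 0"
  proof (cases "y1 = 0")
    case True
    then show ?thesis unfolding band_form_square using assms mon21_nonzero_inside by simp
  next
    case False
    then have "((poly discr x)\<^sup>2 - 4) * y1\<^sup>2 < 0" using disc by (simp add: mult_neg_pos)
    then show ?thesis unfolding band_form_square using less_le_trans[OF _ zero_le_power2] by simp
  qed
  then show ?thesis by simp
qed

lemma mon21_pderiv_discr_pos:
  assumes "\<bar>poly discr x\<bar> < 2" shows "poly mon21 x * poly (pderiv discr) x > 0"
proof -
  have "poly (phi k) x \<noteq> 0 \<or> poly (psi k) x \<noteq> 0" for k
    using arg_cong[OF wronskian[of k], of "\<lambda>p. poly p x"] by auto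
  then have "(\<Sum>k\<in>{1..N}. w k * (poly mon21 x * band_form x (poly (phi k) x) (poly (psi k) x))) > 0"
    using N2 w_pos mon21_band_form_pos[OF assms] by (intro sum_pos) auto
  then show ?thesis
    unfolding pderiv_discr_eq_sum by (simp add: sum_distrib_left algebra_simps)
qed

lemma pderiv_discr_nonzero: "\<bar>poly discr x\<bar> < 2 \<Longrightarrow> poly (pderiv discr) x \<noteq> 0"
  using mon21_pderiv_discr_pos by fastforce

lemma band_edge_mon21_zero:
  assumes "(poly discr x)\<^sup>2 = 4" "poly (pderiv discr) x = 0" shows "poly mon21 x = 0"
proof (rule ccontr)
  assume nz: "poly mon21 x \<noteq> 0"
  define l where "l k = 2 * poly mon21 x * poly (psi k) x + (poly mon11 x - poly mon22 x) * poly (phi k) x" for k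
  have "4 * poly mon21 x * band_form x (poly (phi k) x) (poly (psi k) x) = (l k)\<^sup>2" for k
    using band_form_square assms(1) unfolding l_def by simp
  then have "4 * poly mon21 x * poly (pderiv discr) x = (\<Sum>k\<in>{1..N}. w k * (l k)\<^sup>2)"
    unfolding pderiv_discr_eq_sum by (simp add: sum_distrib_left algebra_simps)
  then have "l 1 = 0" "l 2 = 0" using assms(2) weighted_sum_squares_eq_0 by auto
  moreover have "l 2 - poly (phi 2) x * l 1 = 2 * poly mon21 x * (poly (psi 2) x - poly (phi 2) x * poly (psi 1) x)"
    unfolding l_def phi_1 by (simp add: algebra_simps)
  moreover have "f 1 \<noteq> 0" using f_nonzero N2 by auto
  ultimately show False using psi_2_minus_phi_2[of x] nz by simp
qed

lemma pderiv_discr_zero_iff_band_edge: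
  assumes "(poly discr x)\<^sup>2 = 4"
  shows "poly (pderiv discr) x = 0 \<longleftrightarrow> poly mon12 x = 0 \<and> poly mon21 x = 0 \<and> poly mon11 x = poly mon22 x"
proof
  assume dS: "poly (pderiv discr) x = 0"
  have c: "poly mon21 x = 0" by (rule band_edge_mon21_zero[OF assms dS])
  have "(poly mon11 x - poly mon22 x)\<^sup>2 = (poly discr x)\<^sup>2 - 4 * (poly mon11 x * poly mon22 x)"
    unfolding discr_def by (simp add: power2_eq_square algebra_simps)
  also have "\<dots> = 0" using det_mon[of x] c assms by simp
  finally have a: "poly mon11 x = poly mon22 x" by simp
  have "(\<Sum>k\<in>{1..N}. w k * (poly (phi k) x)\<^sup>2) > 0"
    using N2 w_pos by (intro sum_pos2[of _ 1]) (auto simp: phi_1 less_imp_le)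
  moreover have "poly (pderiv discr) x = - poly mon12 x * (\<Sum>k\<in>{1..N}. w k * (poly (phi k) x)\<^sup>2)"
    unfolding pderiv_discr_eq_sum band_form_def using a c by (simp add: sum_distrib_left algebra_simps)
  ultimately have "poly mon12 x = 0" using dS by simp
  with a c show "poly mon12 x = 0 \<and> poly mon21 x = 0 \<and> poly mon11 x = poly mon22 x" by simp
qed (simp add: pderiv_discr_eq_sum band_form_def)

text \<open>A non-real root \<open>z\<close> of \<open>discr\<close> would make \<open>\<i>\<close> a Floquet multiplier: some solution satisfies
  \<open>(y\<^sub>N, f\<^sub>N \<Delta>y\<^sub>N) = \<i> M (y\<^sub>0, f\<^sub>0 \<Delta>y\<^sub>0)\<close>, which preserves the Lagrange bracket, contradicting Green's identity.\<close>

lemma discr_root_real: assumes "poly (cpoly discr) z = 0" shows "Im z = 0"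
proof (rule ccontr)
  assume Im: "Im z \<noteq> 0"
  define A B C D where "A = poly (cpoly (phi N)) z" and "B = poly (cpoly (psi N)) z"
    and "C = poly (cpoly (phi_qd N)) z" and "D = poly (cpoly (psi_qd N)) z"
  have "(\<i> * of_real m11 - A) * (\<i> * of_real m22 - D) - (\<i> * of_real m12 - B) * (\<i> * of_real m21 - C)
      = (A * D - B * C) - (of_real m11 * of_real m22 - of_real m12 * of_real m21)
        - \<i> * (of_real m22 * A - of_real m12 * C + (of_real m11 * D - of_real m21 * B))"
    by (simp add: algebra_simps)
  moreover have "A * D - B * C = 1"
    using arg_cong[OF wronskian[of N], of "\<lambda>p. poly (cpoly p) z"] by (simp add: A_def B_def C_def D_def)
  moreover have "of_real m22 * A - of_real m12 * C + (of_real m11 * D - of_real m21 * B) = 0"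
    using assms by (simp add: discr_def mon11_def mon22_def A_def B_def C_def D_def)
  moreover have "of_real m11 * of_real m22 - of_real m12 * of_real m21 = (1::complex)"
    using det_M by (metis of_real_1 of_real_diff of_real_mult)
  ultimately have "(\<i> * of_real m11 - A) * (\<i> * of_real m22 - D) - (\<i> * of_real m12 - B) * (\<i> * of_real m21 - C) = 0"
    by simp
  then obtain v1 v2 where v: "v1 \<noteq> 0 \<or> v2 \<noteq> 0"
      "(\<i> * of_real m11 - A) * v1 + (\<i> * of_real m12 - B) * v2 = 0"
      "(\<i> * of_real m21 - C) * v1 + (\<i> * of_real m22 - D) * v2 = 0"
    using singular_2x2_kernel_nontrivial by blast
  have "csol z v1 v2 N = \<i> * (of_real m11 * v1 + of_real m12 * v2)"
    using v(2) by (simp add: csol_def A_def[symmetric] B_def[symmetric] algebra_simps)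
  moreover have "csol_qd z v1 v2 N = \<i> * (of_real m21 * v1 + of_real m22 * v2)"
    using v(3) by (simp add: csol_qd_def C_def[symmetric] D_def[symmetric] algebra_simps)
  ultimately have "lagrange_bracket (csol z v1 v2 N) (csol_qd z v1 v2 N) = lagrange_bracket v1 v2"
    by (simp add: lagrange_bracket_mult_ii lagrange_bracket_real_lincomb det_M)
  then show False using csol_trivial_if_bracket_preserved[OF Im] v(1) by blast
qed

end

locale sl_coupled_pos = sl_coupled +
  assumes M_pos: "m11 - f 0 * m12 > 0"
begin

lemma discr_degree: "degree discr = N" and discr_lead_coeff: "(-1) ^ N * lead_coeff discr > 0"
proof -
  note dc = fundamental_degree_coeff_N
  have "degree discr \<le> N" unfolding discr_def mon11_def mon22_def using dc N2
    by (auto intro!: degree_add_le degree_diff_le order.trans[OF degree_smult_le])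
  have "coeff (phi N) N = 0" "coeff (psi N) N = 0" using dc N2 by (auto intro!: coeff_eq_0)
  then have "coeff discr N = m11 * coeff (psi_qd N) N - m12 * coeff (phi_qd N) N"
    by (simp add: discr_def mon11_def mon22_def)
  also have "\<dots> = (-1) ^ N * ((\<Prod>k=1..N. w k) / (\<Prod>k<N. f k) * (m11 - f 0 * m12))"
    using dc prod_f_pos by (simp add: field_simps less_imp_neq[symmetric])
  finally have "(-1) ^ N * coeff discr N = (\<Prod>k=1..N. w k) / (\<Prod>k<N. f k) * (m11 - f 0 * m12)"
    by (simp flip: mult.assoc power_add)
  also have "\<dots> > 0" using prod_w_pos[of N] prod_f_pos M_pos by simp
  finally have pos: "(-1) ^ N * coeff discr N > 0" .
  then have "N \<le> degree discr" by (intro le_degree) auto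
  with \<open>degree discr \<le> N\<close> show "degree discr = N" by simp
  with pos show "(-1) ^ N * lead_coeff discr > 0" by simp
qed

lemma card_discr_roots: "card {x. poly discr x = 0} = N"
  using discr_degree N2 discr_root_real pderiv_discr_nonzero
  by (subst card_roots_eq_degree_if_real_simple) auto

sublocale band: band_poly discr N
proof
  show "\<exists>X. \<forall>x\<le>X. poly discr x > 2"
    using discr_degree discr_lead_coeff N2 by (intro poly_gt_at_bot) auto
  have "\<exists>Y. \<forall>x\<ge>Y. poly (smult ((-1) ^ N) discr) x > 2"
    using discr_degree discr_lead_coeff N2 by (intro poly_gt_at_top) (auto simp: lead_coeff_smult)
  then show "\<exists>Y. \<forall>x\<ge>Y. (-1) ^ N * poly discr x > 2" by simp
qed (use N2 discr_degree card_discr_roots pderiv_discr_nonzero in auto)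

end

section \<open>Solution spaces and eigenvalues\<close>

interpretation seq: vector_space cscale
  by unfold_locales (auto simp: cscale_def fun_eq_iff algebra_simps)

context sl_problem
begin

text \<open>Every solution is determined by its initial data \<open>(y\<^sub>0, f\<^sub>0 \<Delta>y\<^sub>0) = (v1, v2)\<close>; it is cut off
  beyond \<open>N + 1\<close> to match \<open>sol_space\<close>.\<close>

definition sol :: "real \<Rightarrow> complex \<Rightarrow> complex \<Rightarrow> nat \<Rightarrow> complex" where
  "sol lam v1 v2 n = (if n \<le> Suc N then csol (of_real lam) v1 v2 n else 0)"

lemma sol_lincomb: "sol lam v1 v2 = cscale v1 (sol lam 1 0) + cscale v2 (sol lam 0 1)"
  by (auto simp: fun_eq_iff sol_def cscale_def csol_def algebra_simps)

lemma sol_scale: "sol lam (t * a) (t * b) = cscale t (sol lam a b)"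
  by (auto simp: fun_eq_iff sol_def cscale_def csol_def algebra_simps)

lemma sol_0: "sol lam v1 v2 0 = v1"
  by (simp add: sol_def csol_0)

lemma sol_1: "sol lam v1 v2 1 = v1 + of_real (1 / f 0) * v2"
  using csol_Suc[of "of_real lam" v1 v2 0] by (simp add: sol_def csol_0 csol_qd_0)

lemma f_mult_inv_f: "n \<le> N \<Longrightarrow> of_real (f n) * (of_real (1 / f n) * x) = (x :: complex)"
  using f_nonzero by (simp add: field_simps)

lemma sol_eq_0_iff: "sol lam v1 v2 = 0 \<longleftrightarrow> v1 = 0 \<and> v2 = 0"
proof
  assume "sol lam v1 v2 = 0"
  then have "sol lam v1 v2 0 = 0" "sol lam v1 v2 1 = 0" by auto
  then show "v1 = 0 \<and> v2 = 0" using f_nonzero unfolding sol_0 sol_1 by simp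
qed (simp add: sol_def csol_def fun_eq_iff)

lemma sl_eq_sol: "sl_eq f q w N lam (sol lam v1 v2)"
  unfolding sl_eq_def
proof
  fix n assume n: "n \<in> {1..N}"
  define z where "z = (of_real lam :: complex)"
  obtain m where m: "n = Suc m" using n by (cases n) auto
  have "of_real (f n) * (sol lam v1 v2 (n + 1) - sol lam v1 v2 n) = csol_qd z v1 v2 n"
    using n csol_Suc[of z v1 v2 n] f_mult_inv_f[of n] by (simp add: sol_def z_def)
  moreover have "of_real (f (n - 1)) * (sol lam v1 v2 n - sol lam v1 v2 (n - 1)) = csol_qd z v1 v2 m"
    using n csol_Suc[of z v1 v2 m] f_mult_inv_f[of m] m by (simp add: sol_def z_def)
  moreover have "csol_qd z v1 v2 n = csol_qd z v1 v2 m + (of_real (q n) - z * of_real (w n)) * csol z v1 v2 n"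
    using csol_qd_Suc[of z v1 v2 m] m by simp
  moreover have "sol lam v1 v2 n = csol z v1 v2 n" using n by (simp add: sol_def z_def)
  ultimately show "- (of_real (f n) * (sol lam v1 v2 (n + 1) - sol lam v1 v2 n) -
           of_real (f (n - 1)) * (sol lam v1 v2 n - sol lam v1 v2 (n - 1))) +
          of_real (q n) * sol lam v1 v2 n = of_real (lam * w n) * sol lam v1 v2 n"
    by (simp add: z_def algebra_simps)
qed

lemma sl_eq_imp_csol:
  assumes "sl_eq f q w N lam y" "n \<le> N"
  defines "v \<equiv> of_real (f 0) * (y 1 - y 0)"
  shows "y n = csol (of_real lam) (y 0) v n \<and> y (Suc n) = csol (of_real lam) (y 0) v (Suc n)"
  using assms(2)
proof (induction n)
  case 0
  show ?case using csol_Suc[of "of_real lam" "y 0" v 0] f_nonzero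
    by (simp add: csol_0 csol_qd_0 v_def field_simps)
next
  case (Suc n)
  define z where "z = (of_real lam :: complex)"
  have IH: "y n = csol z (y 0) v n" "y (Suc n) = csol z (y 0) v (Suc n)" using Suc by (auto simp: z_def)
  have "Suc n \<in> {1..N}" using Suc.prems by simp
  then have eq: "- (of_real (f (Suc n)) * (y (Suc n + 1) - y (Suc n)) - of_real (f n) * (y (Suc n) - y n)) +
          of_real (q (Suc n)) * y (Suc n) = of_real (lam * w (Suc n)) * y (Suc n)"
    using assms(1) unfolding sl_eq_def by fastforce
  have "of_real (f n) * (y (Suc n) - y n) = csol_qd z (y 0) v n"
    unfolding IH using csol_Suc[of z "y 0" v n] f_mult_inv_f[of n] Suc.prems by simp
  then have "of_real (f (Suc n)) * (y (Suc (Suc n)) - y (Suc n)) = csol_qd z (y 0) v (Suc n)"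
    using eq unfolding csol_qd_Suc IH(2)[symmetric] by (simp add: z_def algebra_simps)
  then have "y (Suc (Suc n)) = y (Suc n) + of_real (1 / f (Suc n)) * csol_qd z (y 0) v (Suc n)"
    using f_nonzero Suc.prems by (simp add: field_simps)
  then show ?case using IH(2) by (simp add: csol_Suc z_def)
qed

lemma sol_space_eq:
  "sol_space f q w N AB lam = {y. \<exists>v1 v2. y = sol lam v1 v2 \<and> bc_holds f N AB (sol lam v1 v2)}"
proof (intro set_eqI iffI)
  fix y assume "y \<in> sol_space f q w N AB lam"
  then have y: "\<forall>n > N + 1. y n = 0" "sl_eq f q w N lam y" "bc_holds f N AB y"
    by (auto simp: sol_space_def)
  have "y = sol lam (y 0) (of_real (f 0) * (y 1 - y 0))"
  proof
    fix n show "y n = sol lam (y 0) (of_real (f 0) * (y 1 - y 0)) n"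
    proof (cases "n \<le> Suc N")
      case True
      then show ?thesis using sl_eq_imp_csol[OF y(2), of n] sl_eq_imp_csol[OF y(2), of "n - 1"]
        by (cases "n \<le> N") (auto simp: sol_def)
    qed (use y(1) in \<open>simp add: sol_def\<close>)
  qed
  with y(3) show "y \<in> {y. \<exists>v1 v2. y = sol lam v1 v2 \<and> bc_holds f N AB (sol lam v1 v2)}"
    by (metis (mono_tags, lifting) mem_Collect_eq)
qed (auto simp: sol_space_def sol_def sl_eq_sol)

lemma bc_holds_sol_iff:
  "bc_holds f N (A, B) (sol lam v1 v2) \<longleftrightarrow>
    (A$1$1 * v1 + A$1$2 * v2 + B$1$1 * csol (of_real lam) v1 v2 N + B$1$2 * csol_qd (of_real lam) v1 v2 N = 0 \<and>
     A$2$1 * v1 + A$2$2 * v2 + B$2$1 * csol (of_real lam) v1 v2 N + B$2$2 * csol_qd (of_real lam) v1 v2 N = 0)"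
proof -
  have "of_real (f 0) * (sol lam v1 v2 1 - sol lam v1 v2 0) = v2"
    unfolding sol_1 sol_0 using f_nonzero by (simp add: field_simps)
  moreover have "of_real (f N) * (sol lam v1 v2 (N + 1) - sol lam v1 v2 N) = csol_qd (of_real lam) v1 v2 N"
    using csol_Suc[of "of_real lam" v1 v2 N] f_mult_inv_f[of N] by (simp add: sol_def)
  ultimately show ?thesis
    unfolding bc_holds_def fst_conv snd_conv sol_0
    by (simp add: sol_def vec_eq_iff forall_2 matrix_vector_mult_def sum_2 vec2_def add.assoc)
qed

definition kernel_sols :: "real \<Rightarrow> complex \<Rightarrow> complex \<Rightarrow> complex \<Rightarrow> complex \<Rightarrow> (nat \<Rightarrow> complex) set" where
  "kernel_sols lam x11 x12 x21 x22 =
     {y. \<exists>v1 v2. y = sol lam v1 v2 \<and> x11 * v1 + x12 * v2 = 0 \<and> x21 * v1 + x22 * v2 = 0}"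

lemma kernel_sols_nontrivial_iff:
  "(\<exists>y\<in>kernel_sols lam x11 x12 x21 x22. y \<noteq> 0) \<longleftrightarrow> x11 * x22 - x12 * x21 = 0"
proof
  assume "\<exists>y\<in>kernel_sols lam x11 x12 x21 x22. y \<noteq> 0"
  then obtain v1 v2 where "sol lam v1 v2 \<noteq> 0" "x11 * v1 + x12 * v2 = 0" "x21 * v1 + x22 * v2 = 0"
    unfolding kernel_sols_def by blast
  then show "x11 * x22 - x12 * x21 = 0"
    using regular_2x2_kernel_trivial sol_eq_0_iff by blast
next
  assume "x11 * x22 - x12 * x21 = 0"
  then obtain v1 v2 where "v1 \<noteq> 0 \<or> v2 \<noteq> 0" "x11 * v1 + x12 * v2 = 0" "x21 * v1 + x22 * v2 = 0"
    using singular_2x2_kernel_nontrivial by blast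
  then show "\<exists>y\<in>kernel_sols lam x11 x12 x21 x22. y \<noteq> 0"
    unfolding kernel_sols_def using sol_eq_0_iff by blast
qed

lemma dim_kernel_sols_full: "seq.dim (kernel_sols lam 0 0 0 0) = 2"
proof -
  define e1 e2 where "e1 = sol lam 1 0" and "e2 = sol lam 0 1"
  have "e1 0 \<noteq> e2 0" by (simp add: e1_def e2_def sol_0)
  then have "e1 \<noteq> e2" by auto
  have "e2 \<notin> seq.span {e1}"
  proof
    assume "e2 \<in> seq.span {e1}"
    then obtain k where k: "e2 = cscale k e1" by (auto simp: seq.span_singleton)
    then have "e2 0 = k * e1 0" by (simp add: cscale_def)
    then have "k = 0" by (simp add: e1_def e2_def sol_0)
    then show False using k sol_eq_0_iff[of lam 0 1] by (simp add: cscale_def e2_def fun_eq_iff)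
  qed
  moreover have "e1 \<noteq> 0" using sol_eq_0_iff[of lam 1 0] by (simp add: e1_def)
  ultimately have indep: "seq.independent {e2, e1}"
    using \<open>e1 \<noteq> e2\<close> by (simp add: seq.independent_insert)
  have K: "kernel_sols lam 0 0 0 0 = {y. \<exists>v1 v2. y = sol lam v1 v2}"
    by (simp add: kernel_sols_def)
  have "{e2, e1} \<subseteq> kernel_sols lam 0 0 0 0" unfolding K e1_def e2_def by blast
  moreover have "kernel_sols lam 0 0 0 0 \<subseteq> seq.span {e2, e1}"
  proof
    fix y assume "y \<in> kernel_sols lam 0 0 0 0"
    then obtain v1 v2 where "y = sol lam v1 v2" unfolding K by blast
    then have "y = cscale v1 e1 + cscale v2 e2" using sol_lincomb[of lam v1 v2] by (simp add: e1_def e2_def)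
    moreover have "e1 \<in> seq.span {e2, e1}" "e2 \<in> seq.span {e2, e1}" by (auto intro: seq.span_base)
    ultimately show "y \<in> seq.span {e2, e1}" by (auto intro: seq.span_add seq.span_scale)
  qed
  ultimately have "card {e2, e1} = seq.dim (kernel_sols lam 0 0 0 0)"
    using indep by (rule seq.basis_card_eq_dim)
  with \<open>e1 \<noteq> e2\<close> show ?thesis by simp
qed

lemma dim_kernel_sols_line:
  assumes "x11 * x22 - x12 * x21 = 0" "x11 \<noteq> 0 \<or> x12 \<noteq> 0 \<or> x21 \<noteq> 0 \<or> x22 \<noteq> 0"
  shows "seq.dim (kernel_sols lam x11 x12 x21 x22) = 1"
proof -
  obtain a b where ab: "a \<noteq> 0 \<or> b \<noteq> 0"
    "\<And>v1 v2. (x11 * v1 + x12 * v2 = 0 \<and> x21 * v1 + x22 * v2 = 0) \<longleftrightarrow> (\<exists>t. v1 = t * a \<and> v2 = t * b)"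
    using singular_2x2_kernel_line[OF assms] by blast
  define y0 where "y0 = sol lam a b"
  have "kernel_sols lam x11 x12 x21 x22 = range (\<lambda>t. cscale t y0)"
    unfolding kernel_sols_def ab(2) y0_def by (auto simp flip: sol_scale)
  then have "{y0} \<subseteq> kernel_sols lam x11 x12 x21 x22" "kernel_sols lam x11 x12 x21 x22 \<subseteq> seq.span {y0}"
    by (auto simp: seq.span_singleton intro!: range_eqI[where x = 1] simp: cscale_def)
  moreover have "seq.independent {y0}" using ab(1) sol_eq_0_iff by (simp add: y0_def seq.independent_insert)
  ultimately show ?thesis using seq.basis_card_eq_dim[of "{y0}"] by simp
qed

lemma dim_kernel_sols:
  assumes "x11 * x22 - x12 * x21 = 0"
  shows "seq.dim (kernel_sols lam x11 x12 x21 x22) = (if x11 = 0 \<and> x12 = 0 \<and> x21 = 0 \<and> x22 = 0 then 2 else 1)"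
  using dim_kernel_sols_full dim_kernel_sols_line[OF assms] by auto

end

lemma count_list_map_upt: "count_list (map g [0..<n]) x = card {j. j < n \<and> g j = x}"
proof (induction n)
  case (Suc n)
  have "{j. j < Suc n \<and> g j = x} = {j. j < n \<and> g j = x} \<union> (if g n = x then {n} else {})"
    by (auto simp: less_Suc_eq)
  then show ?case using Suc by (simp add: card_insert_if)
qed simp

lemma eig_eq_enumeration:
  assumes fin: "finite {\<mu>. is_eigenvalue f q w N AB \<mu>}"
    and count: "\<And>x. (if is_eigenvalue f q w N AB x then multiplicity f q w N AB x else 0) = card {j. j < n \<and> g j = x}"
    and sorted: "\<And>j. Suc j < n \<Longrightarrow> g j \<le> g (Suc j)"
    and "j < n"
  shows "eig f q w N AB j = g j"
proof -
  have ms: "eig_mset f q w N AB = mset (map g [0..<n])"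
  proof (rule multiset_eqI)
    fix x
    have "count (eig_mset f q w N AB) x = (if is_eigenvalue f q w N AB x then multiplicity f q w N AB x else 0)"
      using fin by (simp add: eig_mset_def count_sum)
    also have "\<dots> = count (mset (map g [0..<n])) x" unfolding count_mset count_list_map_upt count ..
    finally show "count (eig_mset f q w N AB) x = count (mset (map g [0..<n])) x" .
  qed
  have "sorted (map g [0..<n])" unfolding sorted_iff_nth_Suc using sorted by simp
  then have "sorted_list_of_multiset (eig_mset f q w N AB) = map g [0..<n]"
    unfolding ms sorted_list_of_multiset_mset by (rule sorted_sort_id)
  then show ?thesis using \<open>j < n\<close> by (simp add: eig_def)
qed

context sl_coupled
begin

lemma sol_space_coupled:
  assumes "M$1$1 = m11" "M$1$2 = m12" "M$2$1 = m21" "M$2$2 = m22"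
  shows "sol_space f q w N (coupled_bc (cmat c M)) lam =
    kernel_sols lam (c * of_real m11 - of_real (poly (phi N) lam)) (c * of_real m12 - of_real (poly (psi N) lam))
      (c * of_real m21 - of_real (poly (phi_qd N) lam)) (c * of_real m22 - of_real (poly (psi_qd N) lam))"
  unfolding sol_space_eq kernel_sols_def coupled_bc_def bc_holds_sol_iff
  by (simp add: cmat_def mat_def csol_def csol_qd_def assms algebra_simps)

lemma det_coupled:
  fixes c :: complex
  shows "(c * of_real m11 - of_real (poly (phi N) lam)) * (c * of_real m22 - of_real (poly (psi_qd N) lam))
    - (c * of_real m12 - of_real (poly (psi N) lam)) * (c * of_real m21 - of_real (poly (phi_qd N) lam))
    = c\<^sup>2 - c * of_real (poly discr lam) + 1"
proof -
  have "of_real m11 * of_real m22 - of_real m12 * of_real m21 = (1::complex)"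
    using det_M by (metis of_real_1 of_real_diff of_real_mult)
  moreover have "of_real (poly (phi N) lam) * of_real (poly (psi_qd N) lam)
      - of_real (poly (psi N) lam) * of_real (poly (phi_qd N) lam) = (1::complex)"
    using arg_cong[OF wronskian[of N], of "\<lambda>p. poly p lam"] by (metis of_real_1 of_real_diff of_real_mult poly_1 poly_diff poly_mult)
  moreover have "(of_real (poly discr lam) :: complex) =
      of_real m22 * of_real (poly (phi N) lam) - of_real m12 * of_real (poly (phi_qd N) lam)
      + of_real m11 * of_real (poly (psi_qd N) lam) - of_real m21 * of_real (poly (psi N) lam)"
    by (simp add: discr_def mon11_def mon22_def)
  ultimately show ?thesis by (simp only: power2_eq_square) algebra
qed

lemma coupled_is_eigenvalue_iff:
  assumes "M$1$1 = m11" "M$1$2 = m12" "M$2$1 = m21" "M$2$2 = m22"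
  shows "is_eigenvalue f q w N (coupled_bc (cmat c M)) \<mu> \<longleftrightarrow> c\<^sup>2 - c * of_real (poly discr \<mu>) + 1 = 0"
  unfolding is_eigenvalue_def sol_space_coupled[OF assms] kernel_sols_nontrivial_iff det_coupled ..

lemma coupled_multiplicity:
  assumes "M$1$1 = m11" "M$1$2 = m12" "M$2$1 = m21" "M$2$2 = m22"
    and "c\<^sup>2 - c * of_real (poly discr \<mu>) + 1 = 0"
  shows "multiplicity f q w N (coupled_bc (cmat c M)) \<mu> =
    (if c * of_real m11 = of_real (poly (phi N) \<mu>) \<and> c * of_real m12 = of_real (poly (psi N) \<mu>) \<and>
        c * of_real m21 = of_real (poly (phi_qd N) \<mu>) \<and> c * of_real m22 = of_real (poly (psi_qd N) \<mu>)
     then 2 else 1)"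
  unfolding multiplicity_def sol_space_coupled[OF assms(1-4)]
  using dim_kernel_sols[OF trans[OF det_coupled assms(5)]] by simp

lemma monodromy_eq_scaled_M_iff:
  "(poly (phi N) x = r * m11 \<and> poly (psi N) x = r * m12 \<and> poly (phi_qd N) x = r * m21 \<and> poly (psi_qd N) x = r * m22)
     \<longleftrightarrow> (poly mon11 x = r \<and> poly mon22 x = r \<and> poly mon12 x = 0 \<and> poly mon21 x = 0)"
proof -
  define A B C D where "A = poly (phi N) x" and "B = poly (psi N) x"
    and "C = poly (phi_qd N) x" and "D = poly (psi_qd N) x"
  have "(A = r * m11 \<and> B = r * m12 \<and> C = r * m21 \<and> D = r * m22) \<longleftrightarrow>
      (m22 * A - m12 * C = r \<and> m11 * D - m21 * B = r \<and> m22 * B - m12 * D = 0 \<and> m11 * C - m21 * A = 0)"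
  proof
    assume "A = r * m11 \<and> B = r * m12 \<and> C = r * m21 \<and> D = r * m22"
    then show "m22 * A - m12 * C = r \<and> m11 * D - m21 * B = r \<and> m22 * B - m12 * D = 0 \<and> m11 * C - m21 * A = 0"
      using det_M by auto algebra+
  next
    assume "m22 * A - m12 * C = r \<and> m11 * D - m21 * B = r \<and> m22 * B - m12 * D = 0 \<and> m11 * C - m21 * A = 0"
    then have h: "m22 * A - m12 * C = r" "m11 * D - m21 * B = r" "m22 * B - m12 * D = 0"
      "m11 * C - m21 * A = 0" by auto
    have "A = r * m11" using det_M h by algebra
    moreover have "B = r * m12" using det_M h by algebra
    moreover have "C = r * m21" using det_M h by algebra
    moreover have "D = r * m22" using det_M h by algebra
    ultimately show "A = r * m11 \<and> B = r * m12 \<and> C = r * m21 \<and> D = r * m22" by blast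
  qed
  then show ?thesis
    by (simp add: mon11_def mon12_def mon21_def mon22_def A_def B_def C_def D_def)
qed

end

lemma abs_cos_less_1: "sin x \<noteq> 0 \<Longrightarrow> \<bar>cos x\<bar> < (1 :: real)"
  using sin_cos_squared_add[of x] abs_square_less_1[of "cos x"]
  by (smt (verit) zero_less_power2)

context sl_coupled_pos
begin

lemma eig_eq_level:
  assumes c0: "\<bar>c0\<bar> \<le> 2"
    and eigen: "\<And>\<mu>. is_eigenvalue f q w N AB \<mu> \<longleftrightarrow> poly discr \<mu> = c0"
    and mult: "\<And>\<mu>. poly discr \<mu> = c0 \<Longrightarrow>
      multiplicity f q w N AB \<mu> = (if poly (pderiv discr) \<mu> = 0 then 2 else 1)"
    and "j < N"
  shows "eig f q w N AB j = band.level c0 j"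
proof (rule eig_eq_enumeration[OF _ _ _ \<open>j < N\<close>])
  have "discr - [:c0:] \<noteq> 0"
    using discr_degree N2 by (metis degree_pCons_0 eq_iff_diff_eq_0 not_numeral_le_zero)
  then show "finite {\<mu>. is_eigenvalue f q w N AB \<mu>}"
    using poly_roots_finite[of "discr - [:c0:]"] eigen by simp
next
  fix x
  show "(if is_eigenvalue f q w N AB x then multiplicity f q w N AB x else 0) = card {j. j < N \<and> band.level c0 j = x}"
  proof (cases "poly discr x = c0")
    case True
    then show ?thesis using eigen mult band.card_level[OF c0 True] by simp
  next
    case False
    then have "{j. j < N \<and> band.level c0 j = x} = {}" using band.level(2)[OF _ c0] by auto
    then show ?thesis using eigen False by simp
  qed
qed (use band.level_le_Suc c0 in simp)

lemma eig_coupled_pm: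
  assumes M: "M$1$1 = m11" "M$1$2 = m12" "M$2$1 = m21" "M$2$2 = m22"
    and r: "r = 1 \<or> r = -1" and "j < N"
  shows "eig f q w N (coupled_bc (cmat (of_real r) M)) j = band.level (2 * r) j"
proof (rule eig_eq_level[OF _ _ _ \<open>j < N\<close>])
  have char: "(of_real r :: complex)\<^sup>2 - of_real r * of_real (poly discr \<mu>) + 1 = 0 \<longleftrightarrow> poly discr \<mu> = 2 * r" for \<mu>
  proof -
    have "(of_real r :: complex)\<^sup>2 - of_real r * of_real (poly discr \<mu>) + 1 = of_real (r * (2 * r - poly discr \<mu>))"
      using r by (auto simp: algebra_simps power2_eq_square)
    then show ?thesis using r by (auto simp del: of_real_mult of_real_diff)
  qed
  show "\<bar>2 * r\<bar> \<le> 2" using r by auto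
  show "is_eigenvalue f q w N (coupled_bc (cmat (of_real r) M)) \<mu> \<longleftrightarrow> poly discr \<mu> = 2 * r" for \<mu>
    using coupled_is_eigenvalue_iff[OF M] char by simp
  fix \<mu> assume discr: "poly discr \<mu> = 2 * r"
  have sq: "(poly discr \<mu>)\<^sup>2 = 4" using r discr by auto
  have "(poly (phi N) \<mu> = r * m11 \<and> poly (psi N) \<mu> = r * m12 \<and> poly (phi_qd N) \<mu> = r * m21 \<and> poly (psi_qd N) \<mu> = r * m22)
        \<longleftrightarrow> poly (pderiv discr) \<mu> = 0"
    unfolding monodromy_eq_scaled_M_iff pderiv_discr_zero_iff_band_edge[OF sq]
    using discr by (auto simp: discr_def)
  then show "multiplicity f q w N (coupled_bc (cmat (of_real r) M)) \<mu> =
      (if poly (pderiv discr) \<mu> = 0 then 2 else 1)"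
    using coupled_multiplicity[OF M, of "of_real r" \<mu>] char discr
    by (simp only: of_real_mult[symmetric] of_real_eq_iff) (metis mult.commute)
qed

lemma eig_coupled_cis:
  assumes M: "M$1$1 = m11" "M$1$2 = m12" "M$2$1 = m21" "M$2$2 = m22"
    and "sin \<gamma> \<noteq> 0" and "j < N"
  shows "eig f q w N (coupled_bc (cmat (cis \<gamma>) M)) j = band.level (2 * cos \<gamma>) j"
proof (rule eig_eq_level[OF _ _ _ \<open>j < N\<close>])
  have cos: "\<bar>cos \<gamma>\<bar> < 1" using \<open>sin \<gamma> \<noteq> 0\<close> by (rule abs_cos_less_1)
  then show "\<bar>2 * cos \<gamma>\<bar> \<le> 2" by simp
  have "(cis \<gamma>)\<^sup>2 - cis \<gamma> * of_real (poly discr \<mu>) + 1 = cis \<gamma> * of_real (2 * cos \<gamma> - poly discr \<mu>)" for \<mu>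
  proof -
    have "(cis \<gamma>)\<^sup>2 - cis \<gamma> * of_real (poly discr \<mu>) + 1 = cis \<gamma> * (cis \<gamma> + cis (- \<gamma>) - of_real (poly discr \<mu>))"
      using cis_mult[of \<gamma> "- \<gamma>"] by (simp add: algebra_simps power2_eq_square)
    also have "cis \<gamma> + cis (- \<gamma>) = of_real (2 * cos \<gamma>)" by (simp add: complex_eq_iff)
    finally show ?thesis by simp
  qed
  then have char: "(cis \<gamma>)\<^sup>2 - cis \<gamma> * of_real (poly discr \<mu>) + 1 = 0 \<longleftrightarrow> poly discr \<mu> = 2 * cos \<gamma>" for \<mu>
    by (metis cis_neq_zero eq_iff_diff_eq_0 mult_eq_0_iff of_real_eq_0_iff)
  show "is_eigenvalue f q w N (coupled_bc (cmat (cis \<gamma>) M)) \<mu> \<longleftrightarrow> poly discr \<mu> = 2 * cos \<gamma>" for \<mu>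
    using coupled_is_eigenvalue_iff[OF M] char by simp
  fix \<mu> assume discr: "poly discr \<mu> = 2 * cos \<gamma>"
  have not_scalar: "\<not> (cis \<gamma> * of_real m11 = of_real (poly (phi N) \<mu>) \<and> cis \<gamma> * of_real m21 = of_real (poly (phi_qd N) \<mu>))"
  proof
    assume h: "cis \<gamma> * of_real m11 = of_real (poly (phi N) \<mu>) \<and> cis \<gamma> * of_real m21 = of_real (poly (phi_qd N) \<mu>)"
    have "(of_real (poly mon11 \<mu>) :: complex) =
        of_real m22 * of_real (poly (phi N) \<mu>) - of_real m12 * of_real (poly (phi_qd N) \<mu>)"
      by (simp add: mon11_def)
    also have "\<dots> = cis \<gamma> * of_real (m11 * m22 - m12 * m21)"
      unfolding h[THEN conjunct1, symmetric] h[THEN conjunct2, symmetric] by (simp add: algebra_simps)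
    finally have "Im (cis \<gamma>) = 0" using det_M by (metis Im_complex_of_real mult.right_neutral of_real_1)
    then show False using \<open>sin \<gamma> \<noteq> 0\<close> by simp
  qed
  have "poly (pderiv discr) \<mu> \<noteq> 0" using pderiv_discr_nonzero[of \<mu>] discr cos by simp
  moreover have "(cis \<gamma>)\<^sup>2 - cis \<gamma> * of_real (poly discr \<mu>) + 1 = 0" using char[of \<mu>] discr by blast
  ultimately show "multiplicity f q w N (coupled_bc (cmat (cis \<gamma>) M)) \<mu> =
      (if poly (pderiv discr) \<mu> = 0 then 2 else 1)"
    using coupled_multiplicity[OF M] not_scalar by auto
qed

lemma eig_coupled_1: assumes M: "M$1$1 = m11" "M$1$2 = m12" "M$2$1 = m21" "M$2$2 = m22" and "j < N"
  shows "eig f q w N (coupled_bc (cmat 1 M)) j = band.level 2 j"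
  using eig_coupled_pm[OF M, of 1 j] \<open>j < N\<close> by simp

lemma eig_coupled_minus_1: assumes M: "M$1$1 = m11" "M$1$2 = m12" "M$2$1 = m21" "M$2$2 = m22" and "j < N"
  shows "eig f q w N (coupled_bc (cmat 1 (- M))) j = band.level (-2) j"
proof -
  have "cmat 1 (- M) = cmat (of_real (-1)) M" by (simp add: cmat_def vec_eq_iff)
  then show ?thesis using eig_coupled_pm[OF M, of "-1" j] \<open>j < N\<close> by simp
qed

lemma eig_coupled_cis_between:
  assumes M: "M$1$1 = m11" "M$1$2 = m12" "M$2$1 = m21" "M$2$2 = m22" and "sin \<gamma> \<noteq> 0" and "j < N"
  defines "lM \<equiv> eig f q w N (coupled_bc (cmat 1 M)) j"
    and "lmM \<equiv> eig f q w N (coupled_bc (cmat 1 (- M))) j"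
    and "lg \<equiv> eig f q w N (coupled_bc (cmat (cis \<gamma>) M)) j"
  shows "(even j \<longrightarrow> lM < lg \<and> lg < lmM) \<and> (odd j \<longrightarrow> lmM < lg \<and> lg < lM)"
proof -
  have "-2 < 2 * cos \<gamma>" "2 * cos \<gamma> < 2" using abs_cos_less_1[OF \<open>sin \<gamma> \<noteq> 0\<close>] by auto
  then show ?thesis
    using band.level_strict_mono[OF \<open>j < N\<close>, of "-2" "2 * cos \<gamma>"] band.level_strict_mono[OF \<open>j < N\<close>, of "2 * cos \<gamma>" 2]
    unfolding lM_def lmM_def lg_def eig_coupled_1[OF M \<open>j < N\<close>] eig_coupled_minus_1[OF M \<open>j < N\<close>]
      eig_coupled_cis[OF M \<open>sin \<gamma> \<noteq> 0\<close> \<open>j < N\<close>]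
    by auto
qed

section \<open>The separated condition \<open>U\<^sub>K\<close>\<close>

text \<open>\<open>sep_poly\<close> is \<open>y\<^sub>N\<close> for the solution with initial data \<open>(m12, - m11)\<close>, i.e. the solution satisfying the
  condition at \<open>0\<close> of \<open>U\<^sub>K\<close>; its roots are the eigenvalues for \<open>U\<^sub>K\<close>.\<close>

definition sep_poly :: "real poly" where "sep_poly = [:m12:] * phi N - [:m11:] * psi N"

lemma sep_poly_nonzero: "sep_poly \<noteq> 0" and degree_sep_poly: "degree sep_poly = N - 1"
proof -
  note dc = fundamental_degree_coeff_N
  have "degree sep_poly \<le> N - 1" unfolding sep_poly_def using dc
    by (auto intro!: degree_diff_le order.trans[OF degree_smult_le])
  define R where "R = (\<Prod>k=1..N-1. w k) / (\<Prod>k<N. f k)"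
  have "coeff (phi N) (N - 1) = (-1) ^ (N - 1) * f 0 * R" "coeff (psi N) (N - 1) = (-1) ^ (N - 1) * R"
    using dc by (simp_all add: R_def mult_ac)
  then have "coeff sep_poly (N - 1) = (-1) ^ (N - 1) * R * (m12 * f 0 - m11)"
    by (simp add: sep_poly_def algebra_simps)
  moreover have "R > 0" using prod_w_pos[of "N - 1"] prod_f_pos by (simp add: R_def)
  moreover have "m12 * f 0 - m11 \<noteq> 0" using M_pos by (simp add: algebra_simps)
  ultimately have "coeff sep_poly (N - 1) \<noteq> 0" by simp
  then show "sep_poly \<noteq> 0" by auto
  from \<open>coeff sep_poly (N - 1) \<noteq> 0\<close> have "N - 1 \<le> degree sep_poly" by (rule le_degree)
  with \<open>degree sep_poly \<le> N - 1\<close> show "degree sep_poly = N - 1" by simp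
qed

lemma band_form_sep: "band_form x (- m11) (- m12) = poly sep_poly x"
proof -
  have "band_form x (- m11) (- m12) = (m11 * m22 - m12 * m21) * poly sep_poly x"
    unfolding band_form_def mon11_def mon12_def mon21_def mon22_def sep_poly_def
    by (simp add: power2_eq_square algebra_simps)
  then show ?thesis using det_M by simp
qed

lemma sep_poly_pderiv_discr_pos:
  assumes "\<bar>poly discr x\<bar> < 2" shows "poly sep_poly x * poly (pderiv discr) x > 0"
proof -
  have "m11 \<noteq> 0 \<or> m12 \<noteq> 0" using det_M by auto
  then have "poly mon21 x * poly sep_poly x > 0"
    using mon21_band_form_pos[OF assms, of "- m11" "- m12"] by (simp add: band_form_sep)
  moreover have "poly mon21 x * poly (pderiv discr) x > 0" by (rule mon21_pderiv_discr_pos[OF assms])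
  ultimately show ?thesis by (auto simp: zero_less_mult_iff)
qed

definition sep_root :: "nat \<Rightarrow> real" where
  "sep_root j = (SOME r. poly sep_poly r = 0 \<and> band.band_hi j \<le> r \<and> r \<le> band.band_lo (Suc j))"

lemma sep_root: assumes "Suc j < N"
  shows "poly sep_poly (sep_root j) = 0" "band.band_hi j \<le> sep_root j" "sep_root j \<le> band.band_lo (Suc j)"
proof -
  have "\<exists>r. poly sep_poly r = 0 \<and> band.band_hi j \<le> r \<and> r \<le> band.band_lo (Suc j)"
    using band.gap_has_root[OF sep_poly_pderiv_discr_pos assms] .
  then have "poly sep_poly (sep_root j) = 0 \<and> band.band_hi j \<le> sep_root j \<and> sep_root j \<le> band.band_lo (Suc j)"
    unfolding sep_root_def by (rule someI_ex)
  then show "poly sep_poly (sep_root j) = 0" "band.band_hi j \<le> sep_root j" "sep_root j \<le> band.band_lo (Suc j)"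
    by auto
qed

lemma sep_root_less: assumes "i < j" "Suc j < N" shows "sep_root i < sep_root j"
proof -
  have "sep_root i \<le> band.band_lo (Suc i)" using sep_root(3)[of i] assms by simp
  also have "band.band_lo (Suc i) < band.band_hi (Suc i)" using band.band_lo_less_hi[of "Suc i"] assms by simp
  also have "band.band_hi (Suc i) \<le> sep_root (Suc i)" using sep_root(2)[of "Suc i"] assms by simp
  also have "sep_root (Suc i) \<le> sep_root j"
  proof (cases "Suc i = j")
    case False
    then have "Suc i < j" using assms by simp
    have "sep_root (Suc i) \<le> band.band_lo (Suc (Suc i))" using sep_root(3) assms \<open>Suc i < j\<close> by simp
    also have "\<dots> \<le> band.band_hi j"
      using band.band_ends band.band_lo_less_hi[of j] band.piece_order[of "Suc (Suc i)" j] assms \<open>Suc i < j\<close>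
      by (cases "Suc (Suc i) = j") (auto intro: less_imp_le)
    also have "\<dots> \<le> sep_root j" using sep_root(2) assms by simp
    finally show ?thesis .
  qed simp
  finally show ?thesis .
qed

lemma inj_on_sep_root: "inj_on sep_root {..<N-1}"
  by (intro inj_onI) (metis sep_root_less lessThan_iff less_diff_conv nat_neq_iff less_irrefl Suc_eq_plus1)

lemma sep_poly_roots: "{x. poly sep_poly x = 0} = sep_root ` {..<N-1}"
proof -
  note inj = inj_on_sep_root
  have sub: "sep_root ` {..<N-1} \<subseteq> {x. poly sep_poly x = 0}" using sep_root(1) by auto
  moreover have "card {x. poly sep_poly x = 0} \<le> card (sep_root ` {..<N-1})"
    using card_poly_roots_bound[OF sep_poly_nonzero] degree_sep_poly card_image[OF inj] by simp
  ultimately show ?thesis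
    using poly_roots_finite[OF sep_poly_nonzero] by (intro card_seteq[symmetric]) auto
qed

lemma sol_space_U:
  assumes "Kv$1$1 = k11" "Kv$1$2 = k12"
  shows "sol_space f q w N (U_bc Kv) lam =
    kernel_sols lam (of_real k11) (of_real k12) (of_real (poly (phi N) lam)) (of_real (poly (psi N) lam))"
  unfolding sol_space_eq kernel_sols_def U_bc_def bc_holds_sol_iff
  by (simp add: mat2_def assms csol_def)

lemma U_eigenvalues:
  assumes K: "Kv$1$1 = s * m11" "Kv$1$2 = s * m12" and "s \<noteq> 0"
  shows "is_eigenvalue f q w N (U_bc Kv) \<mu> \<longleftrightarrow> poly sep_poly \<mu> = 0"
    and "poly sep_poly \<mu> = 0 \<Longrightarrow> multiplicity f q w N (U_bc Kv) \<mu> = 1"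
proof -
  have det: "of_real (s * m11) * of_real (poly (psi N) \<mu>) - of_real (s * m12) * of_real (poly (phi N) \<mu>)
      = (- of_real (s * poly sep_poly \<mu>) :: complex)"
    by (simp add: sep_poly_def algebra_simps)
  show "is_eigenvalue f q w N (U_bc Kv) \<mu> \<longleftrightarrow> poly sep_poly \<mu> = 0"
    unfolding is_eigenvalue_def sol_space_U[OF K] kernel_sols_nontrivial_iff det using \<open>s \<noteq> 0\<close> by simp
  assume "poly sep_poly \<mu> = 0"
  moreover have "s * m11 \<noteq> 0 \<or> s * m12 \<noteq> 0" using det_M \<open>s \<noteq> 0\<close> by auto
  ultimately show "multiplicity f q w N (U_bc Kv) \<mu> = 1"
    unfolding multiplicity_def sol_space_U[OF K] using dim_kernel_sols det by auto
qed

lemma eig_U: assumes K: "Kv$1$1 = s * m11" "Kv$1$2 = s * m12" and "s \<noteq> 0" and "Suc j < N"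
  shows "eig f q w N (U_bc Kv) j = sep_root j"
proof (rule eig_eq_enumeration)
  note U = U_eigenvalues[OF K \<open>s \<noteq> 0\<close>]
  show "finite {\<mu>. is_eigenvalue f q w N (U_bc Kv) \<mu>}"
    using U(1) poly_roots_finite[OF sep_poly_nonzero] by simp
  fix x
  have "card {j. j < N - 1 \<and> sep_root j = x} = (if poly sep_poly x = 0 then 1 else 0)"
  proof (cases "poly sep_poly x = 0")
    case True
    then obtain i where "i < N - 1" "x = sep_root i" using sep_poly_roots by auto
    then have "{j. j < N - 1 \<and> sep_root j = x} = {i}" using inj_on_sep_root by (auto simp: inj_on_def)
    with True show ?thesis by simp
  next
    case False
    then have "{j. j < N - 1 \<and> sep_root j = x} = {}" using sep_poly_roots by auto
    with False show ?thesis by simp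
  qed
  then show "(if is_eigenvalue f q w N (U_bc Kv) x then multiplicity f q w N (U_bc Kv) x else 0) =
      card {j. j < N - 1 \<and> sep_root j = x}"
    using U by simp
next
  fix i assume "Suc i < N - 1"
  then have "Suc (Suc i) < N" by simp
  then show "sep_root i \<le> sep_root (Suc i)" using sep_root_less[of i "Suc i"] by simp
qed (use \<open>Suc j < N\<close> in simp)

lemma eig_U_between:
  assumes M: "M$1$1 = m11" "M$1$2 = m12" "M$2$1 = m21" "M$2$2 = m22"
    and K: "K$1$1 = s * m11" "K$1$2 = s * m12" and "s \<noteq> 0" and "j + 2 \<le> N"
  shows "max (eig f q w N (coupled_bc (cmat 1 M)) j) (eig f q w N (coupled_bc (cmat 1 (- M))) j)
           \<le> eig f q w N (U_bc K) j \<and>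
         eig f q w N (U_bc K) j
           \<le> min (eig f q w N (coupled_bc (cmat 1 M)) (j + 1)) (eig f q w N (coupled_bc (cmat 1 (- M))) (j + 1))"
proof -
  have j: "j < N" "Suc j < N" using \<open>j + 2 \<le> N\<close> by auto
  show ?thesis
    unfolding Suc_eq_plus1[symmetric] eig_coupled_1[OF M j(1)] eig_coupled_1[OF M j(2)]
      eig_coupled_minus_1[OF M j(1)] eig_coupled_minus_1[OF M j(2)]
      band.level_pm2_max_min[OF j(1)] band.level_pm2_max_min[OF j(2)] eig_U[OF K \<open>s \<noteq> 0\<close> j(2)]
    using sep_root(2,3)[OF j(2)] by simp
qed

end

theorem theorem3p9:
  fixes f q w :: "nat \<Rightarrow> real" and N :: nat and \<gamma> :: real and K :: "real ^ 2 ^ 2"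
  assumes N2: "N \<ge> 2"
    and f_nz: "\<forall>n\<le>N. f n \<noteq> 0"
    and w_pos: "\<forall>n\<in>{1..N}. w n > 0"
    and prod_pos: "(\<Prod>i<N. 1 / f i) > 0"
    and gamma: "\<gamma> \<in> {-pi<..<0} \<union> {0<..<pi}"
    and K_SL: "det K = 1"
    and K_cond: "K$1$1 - f 0 * K$1$2 \<noteq> 0"
  shows "\<forall>M \<in> {K, -K}. M$1$1 - f 0 * M$1$2 > 0 \<longrightarrow>
     (let lM = eig f q w N (coupled_bc (cmat 1 M));
          lmM = eig f q w N (coupled_bc (cmat 1 (-M)));
          lg = eig f q w N (coupled_bc (cmat (cis \<gamma>) M));
          lU = eig f q w N (U_bc K)
      in (\<forall>j<N. (even j \<longrightarrow> lM j < lg j \<and> lg j < lmM j) \<and>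
                 (odd j \<longrightarrow> lmM j < lg j \<and> lg j < lM j)) \<and>
         (\<forall>j. j + 2 \<le> N \<longrightarrow>
              max (lM j) (lmM j) \<le> lU j \<and> lU j \<le> min (lM (j+1)) (lmM (j+1))))"
proof (intro ballI impI)
  fix M assume M: "M \<in> {K, -K}" "M$1$1 - f 0 * M$1$2 > 0"
  obtain s :: real where s: "s \<noteq> 0" "K$1$1 = s * M$1$1" "K$1$2 = s * M$1$2"
    using M(1) by (auto intro: that[of 1] that[of "-1"])
  have "M$1$1 * M$2$2 - M$1$2 * M$2$1 = 1" using M(1) K_SL by (auto simp: det_2)
  then interpret sl_coupled_pos f q w N "M$1$1" "M$1$2" "M$2$1" "M$2$2"
    using N2 f_nz w_pos prod_pos M(2) by unfold_locales auto
  have "sin \<gamma> \<noteq> 0" using gamma sin_gt_zero[of \<gamma>] sin_gt_zero[of "- \<gamma>"] by force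
  then show "let lM = eig f q w N (coupled_bc (cmat 1 M));
          lmM = eig f q w N (coupled_bc (cmat 1 (-M)));
          lg = eig f q w N (coupled_bc (cmat (cis \<gamma>) M));
          lU = eig f q w N (U_bc K)
      in (\<forall>j<N. (even j \<longrightarrow> lM j < lg j \<and> lg j < lmM j) \<and>
                 (odd j \<longrightarrow> lmM j < lg j \<and> lg j < lM j)) \<and>
         (\<forall>j. j + 2 \<le> N \<longrightarrow>
              max (lM j) (lmM j) \<le> lU j \<and> lU j \<le> min (lM (j+1)) (lmM (j+1)))"
    using eig_coupled_cis_between[OF refl refl refl refl] eig_U_between[OF refl refl refl refl s(2,3,1)]
    unfolding Let_def by blast
qed

end
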